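(* Let $(\mathbb{X},\|\cdot\|)$ be an infinite-dimensional (real or complex) Banach space and let $\mathcal{B}=(\mathbf{e}_n)_{n=1}^\infty$ be a semi-normalized basis of $\mathbb{X}$. Then $\mathbb{X}$ admits an equivalent norm $|||\cdot|||$ such that $\mathcal{B}$ is $1$-quasi-greedy in $(\mathbb{X},|||\cdot|||)$ if and only if $\mathcal{B}$ is unconditional.
   Context: A basis is a Schauder basis; semi-normalized means $0<\inf_n\|\mathbf{e}_n\|\le\sup_n\|\mathbf{e}_n\|<\infty$; $(\mathbf{e}_n^* )$ are the biorthogonal functionals. The basis is unconditional if for every $x$ the series $\sum_n\mathbf{e}_n^*(x)\mathbf{e}_n$ converges to $x$ in every order. For a norm $|||\cdot|||$ on $\mathbb{X}$, $x\in\mathbb{X}$ and $N\in\mathbb{N}$, a greedy set $\Lambda_N(x)$ is any set of $N$ indices with $\min\{|\mathbf{e}_j^*(x)|: j\in\Lambda_N(x)\}\ge\max\{|\mathbf{e}_j^*(x)|: j\notin\Lambda_N(x)\}$, and $\mathcal{G}_N(x)=\sum_{j\in\Lambda_N(x)}\mathbf{e}_j^*(x)\mathbf{e}_j$. The basis is $1$-quasi-greedy in $(\mathbb{X},|||\cdot|||)$ if $|||\mathcal{G}_N(x)|||\le|||x|||$ and $|||x-\mathcal{G}_N(x)|||\le|||x|||$ for all $x$, $N$ and all choices of greedy sets. *)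

theory Defs
  imports "HOL-Analysis.Analysis"
begin

text \<open>For real spaces take sc = scaleR; for complex spaces sc is complex scalar multiplication.\<close>
definition normed_scalar_action :: "('k::real_normed_field \<Rightarrow> 'a::real_normed_vector \<Rightarrow> 'a) \<Rightarrow> bool" where
  "normed_scalar_action sc \<longleftrightarrow>
     (\<forall>a b x. sc (a + b) x = sc a x + sc b x) \<and>
     (\<forall>a x y. sc a (x + y) = sc a x + sc a y) \<and>
     (\<forall>a b x. sc (a * b) x = sc a (sc b x)) \<and>
     (\<forall>x. sc 1 x = x) \<and>
     (\<forall>r x. sc (of_real r) x = scaleR r x) \<and>
     (\<forall>a x. norm (sc a x) = norm a * norm x)"

definition finite_dimensional_over :: "('k::real_normed_field \<Rightarrow> 'a::real_normed_vector \<Rightarrow> 'a) \<Rightarrow> bool" where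
  "finite_dimensional_over sc \<longleftrightarrow>
     (\<exists>F::'a set. finite F \<and> (\<forall>x. \<exists>c::'a \<Rightarrow> 'k. x = (\<Sum>v\<in>F. sc (c v) v)))"

definition schauder_basis :: "('k::real_normed_field \<Rightarrow> 'a::real_normed_vector \<Rightarrow> 'a) \<Rightarrow> (nat \<Rightarrow> 'a) \<Rightarrow> bool" where
  "schauder_basis sc e \<longleftrightarrow>
     (\<forall>x. \<exists>!c::nat \<Rightarrow> 'k. (\<lambda>n. \<Sum>k<n. sc (c k) (e k)) \<longlonglongrightarrow> x)"

definition coord :: "('k::real_normed_field \<Rightarrow> 'a::real_normed_vector \<Rightarrow> 'a) \<Rightarrow> (nat \<Rightarrow> 'a) \<Rightarrow> nat \<Rightarrow> 'a \<Rightarrow> 'k" where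
  "coord sc e n x = (THE c::nat \<Rightarrow> 'k. (\<lambda>m. \<Sum>k<m. sc (c k) (e k)) \<longlonglongrightarrow> x) n"

definition semi_normalized :: "(nat \<Rightarrow> 'a::real_normed_vector) \<Rightarrow> bool" where
  "semi_normalized e \<longleftrightarrow> (\<exists>a b. 0 < a \<and> (\<forall>n. a \<le> norm (e n) \<and> norm (e n) \<le> b))"

definition unconditional_basis :: "('k::real_normed_field \<Rightarrow> 'a::real_normed_vector \<Rightarrow> 'a) \<Rightarrow> (nat \<Rightarrow> 'a) \<Rightarrow> bool" where
  "unconditional_basis sc e \<longleftrightarrow> schauder_basis sc e \<and>
     (\<forall>x. \<forall>\<pi>::nat \<Rightarrow> nat. bij \<pi> \<longrightarrow>
        (\<lambda>n. \<Sum>k<n. sc (coord sc e (\<pi> k) x) (e (\<pi> k))) \<longlonglongrightarrow> x)"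

definition is_norm_over :: "('k::real_normed_field \<Rightarrow> 'a::real_normed_vector \<Rightarrow> 'a) \<Rightarrow> ('a \<Rightarrow> real) \<Rightarrow> bool" where
  "is_norm_over sc N \<longleftrightarrow>
     (\<forall>x. N x = 0 \<longleftrightarrow> x = 0) \<and>
     (\<forall>a x. N (sc a x) = norm a * N x) \<and>
     (\<forall>x y. N (x + y) \<le> N x + N y)"

definition equivalent_norm :: "('k::real_normed_field \<Rightarrow> 'a::real_normed_vector \<Rightarrow> 'a) \<Rightarrow> ('a \<Rightarrow> real) \<Rightarrow> bool" where
  "equivalent_norm sc N \<longleftrightarrow> is_norm_over sc N \<and>
     (\<exists>c C. 0 < c \<and> 0 < C \<and> (\<forall>x. c * norm x \<le> N x \<and> N x \<le> C * norm x))"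

definition greedy_set :: "('k::real_normed_field \<Rightarrow> 'a::real_normed_vector \<Rightarrow> 'a) \<Rightarrow> (nat \<Rightarrow> 'a) \<Rightarrow> 'a \<Rightarrow> nat \<Rightarrow> nat set \<Rightarrow> bool" where
  "greedy_set sc e x m A \<longleftrightarrow> finite A \<and> card A = m \<and>
     (\<forall>i\<in>A. \<forall>j. j \<notin> A \<longrightarrow> norm (coord sc e j x) \<le> norm (coord sc e i x))"

definition greedy_sum :: "('k::real_normed_field \<Rightarrow> 'a::real_normed_vector \<Rightarrow> 'a) \<Rightarrow> (nat \<Rightarrow> 'a) \<Rightarrow> 'a \<Rightarrow> nat set \<Rightarrow> 'a" where
  "greedy_sum sc e x A = (\<Sum>j\<in>A. sc (coord sc e j x) (e j))"

definition one_quasi_greedy :: "('k::real_normed_field \<Rightarrow> 'a::real_normed_vector \<Rightarrow> 'a) \<Rightarrow> (nat \<Rightarrow> 'a) \<Rightarrow> ('a \<Rightarrow> real) \<Rightarrow> bool" where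
  "one_quasi_greedy sc e N \<longleftrightarrow>
     (\<forall>x m A. greedy_set sc e x m A \<longrightarrow>
        N (greedy_sum sc e x A) \<le> N x \<and> N (x - greedy_sum sc e x A) \<le> N x)"

end

theory Submission
  imports Defs
begin

text \<open>
  If N is an equivalent 1-quasi-greedy norm, then adding a basis vector outside a finite support
  never decreases N: for a small coefficient the old support is a greedy set, and a large one
  reduces to a small one by convexity. Hence N (x - P B x) \<le> N x for all finite B, and every
  rearrangement of the expansion of x converges. Conversely, for an unconditional basis a block
  rearrangement shows that all finite coordinate projections P A x of a fixed x are bounded; Baire
  category and a series of successive approximations make the bound uniform,
  norm (P A x) \<le> C * norm x, and then the supremum of norm (P A x) over finite A is an equivalent
  norm in which P A and its complement are contractions.

  The successive approximations produce limits of coordinates, so the scalar field must be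
  complete. This holds because a real normed field is real or complex: every element a is a root
  of a real quadratic, since the minimum of norm ((a - z) * (a - cnj z)) over complex z cannot be
  positive, as the 2 ^ j-th roots trick shows.
\<close>

section \<open>Real normed fields are complete\<close>

text \<open>'a cpx is the ring 'a[i] with i * i = -1, in which the real quadratic quad_at below factors.\<close>
datatype 'a cpx = Cpx (cpx_re: 'a) (cpx_im: 'a)

lemma cpx_eq_iff: "x = y \<longleftrightarrow> cpx_re x = cpx_re y \<and> cpx_im x = cpx_im y"
  by (cases x; cases y) auto

instantiation cpx :: (comm_ring_1) comm_ring_1
begin
definition "0 = Cpx 0 0"
definition "1 = Cpx 1 0"
definition "x + y = Cpx (cpx_re x + cpx_re y) (cpx_im x + cpx_im y)"
definition "x - y = Cpx (cpx_re x - cpx_re y) (cpx_im x - cpx_im y)"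
definition "- x = Cpx (- cpx_re x) (- cpx_im x)"
definition "x * y = Cpx (cpx_re x * cpx_re y - cpx_im x * cpx_im y) (cpx_re x * cpx_im y + cpx_im x * cpx_re y)"
instance
  by intro_classes
    (auto simp: cpx_eq_iff zero_cpx_def one_cpx_def plus_cpx_def minus_cpx_def uminus_cpx_def
      times_cpx_def algebra_simps)
end

lemma cpx_simps [simp]:
  "cpx_re 0 = 0" "cpx_im 0 = 0" "cpx_re 1 = 1" "cpx_im 1 = 0"
  "cpx_re (x + y) = cpx_re x + cpx_re y" "cpx_im (x + y) = cpx_im x + cpx_im y"
  "cpx_re (x - y) = cpx_re x - cpx_re y" "cpx_im (x - y) = cpx_im x - cpx_im y"
  "cpx_re (- x) = - cpx_re x" "cpx_im (- x) = - cpx_im x"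
  "cpx_re (x * y) = cpx_re x * cpx_re y - cpx_im x * cpx_im y"
  "cpx_im (x * y) = cpx_re x * cpx_im y + cpx_im x * cpx_re y"
  by (simp_all add: zero_cpx_def one_cpx_def plus_cpx_def minus_cpx_def uminus_cpx_def times_cpx_def)

definition cpx_cnj :: "'a::comm_ring_1 cpx \<Rightarrow> 'a cpx" where
  "cpx_cnj x = Cpx (cpx_re x) (- cpx_im x)"

lemma cpx_cnj_simps [simp]: "cpx_re (cpx_cnj x) = cpx_re x" "cpx_im (cpx_cnj x) = - cpx_im x"
  by (simp_all add: cpx_cnj_def)

lemma cpx_cnj_mult: "cpx_cnj (x * y) = cpx_cnj x * cpx_cnj y"
  by (simp add: cpx_eq_iff algebra_simps)

lemma cpx_cnj_power: "cpx_cnj (x ^ n) = cpx_cnj x ^ n"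
  by (induction n) (simp_all add: cpx_cnj_mult cpx_eq_iff)

lemma cpx_cnj_prod_list: "cpx_cnj (prod_list (map f xs)) = prod_list (map (\<lambda>r. cpx_cnj (f r)) xs)"
  by (induction xs) (simp_all add: cpx_cnj_mult cpx_eq_iff)

definition cpx_of :: "'a::comm_ring_1 \<Rightarrow> 'a cpx" where
  "cpx_of u = Cpx u 0"

lemma cpx_of_simps [simp]: "cpx_re (cpx_of u) = u" "cpx_im (cpx_of u) = 0"
  by (simp_all add: cpx_of_def)

lemma cpx_of_power: "cpx_of (u ^ n) = cpx_of u ^ n"
  by (induction n) (simp_all add: cpx_eq_iff)

lemma cpx_of_prod_list: "cpx_of (prod_list (map f xs)) = prod_list (map (\<lambda>r. cpx_of (f r)) xs)"
  by (induction xs) (simp_all add: cpx_eq_iff)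

definition cpx_of_complex :: "complex \<Rightarrow> 'a::{comm_ring_1,real_algebra_1} cpx" where
  "cpx_of_complex z = Cpx (of_real (Re z)) (of_real (Im z))"

lemma cpx_of_complex_simps [simp]:
  "cpx_re (cpx_of_complex z) = of_real (Re z)" "cpx_im (cpx_of_complex z) = of_real (Im z)"
  by (simp_all add: cpx_of_complex_def)

lemma cpx_of_complex_add: "cpx_of_complex (z + w) = cpx_of_complex z + cpx_of_complex w"
  by (simp add: cpx_eq_iff)

lemma cpx_of_complex_mult: "cpx_of_complex (z * w) = cpx_of_complex z * cpx_of_complex w"
  by (simp add: cpx_eq_iff algebra_simps of_real_mult[symmetric] del: of_real_mult)

lemma cpx_of_complex_power: "cpx_of_complex (z ^ n) = cpx_of_complex z ^ n"
  by (induction n) (simp_all add: cpx_of_complex_mult cpx_eq_iff)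

lemma cpx_of_complex_minus_one: "cpx_of_complex (-1) = -1"
  by (simp add: cpx_eq_iff)

lemma cpx_norm_power_le:
  "norm (cpx_re (x ^ n)) + norm (cpx_im (x ^ n)) \<le> (norm (cpx_re x) + norm (cpx_im x :: 'a::real_normed_field)) ^ n"
proof (induction n)
  case (Suc n)
  define p q u v where "p = cpx_re x" "q = cpx_im x" "u = cpx_re (x ^ n)" "v = cpx_im (x ^ n)"
  have "norm (cpx_re (x ^ Suc n)) + norm (cpx_im (x ^ Suc n)) = norm (p * u - q * v) + norm (p * v + q * u)"
    by (simp add: p_q_u_v_def)
  also have "\<dots> \<le> (norm p * norm u + norm q * norm v) + (norm p * norm v + norm q * norm u)"
    by (intro add_mono) (auto intro!: order_trans[OF norm_triangle_ineq4] order_trans[OF norm_triangle_ineq] simp: norm_mult)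
  also have "\<dots> = (norm p + norm q) * (norm u + norm v)" by (simp add: algebra_simps)
  also have "\<dots> \<le> (norm p + norm q) * (norm p + norm q) ^ n"
    using Suc by (intro mult_left_mono) (auto simp: p_q_u_v_def)
  finally show ?case by (simp add: p_q_u_v_def)
qed simp

text \<open>For c with c j ^ 2 ^ j = -1, root_list c j w lists the 2 ^ j roots of X ^ 2 ^ j = w ^ 2 ^ j.\<close>
fun root_list :: "(nat \<Rightarrow> 'r::comm_ring_1) \<Rightarrow> nat \<Rightarrow> 'r \<Rightarrow> 'r list" where
  "root_list c 0 w = [w]"
| "root_list c (Suc j) w = root_list c j w @ root_list c j (w * c j)"

lemma prod_list_root_list:
  assumes "\<And>j. c j ^ (2 ^ j) = - 1"
  shows "prod_list (map (\<lambda>r. x - r) (root_list c j w)) = x ^ (2 ^ j) - w ^ (2 ^ j)"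
proof (induction j arbitrary: w)
  case (Suc j)
  have "prod_list (map (\<lambda>r. x - r) (root_list c (Suc j) w))
      = (x ^ (2 ^ j) - w ^ (2 ^ j)) * (x ^ (2 ^ j) - (w * c j) ^ (2 ^ j))"
    using Suc by simp
  also have "(w * c j) ^ (2 ^ j) = - (w ^ (2 ^ j))"
    using assms[of j] by (simp add: power_mult_distrib)
  also have "(x ^ (2 ^ j) - w ^ (2 ^ j)) * (x ^ (2 ^ j) - - (w ^ (2 ^ j)))
      = (x ^ (2 ^ j)) ^ 2 - (w ^ (2 ^ j)) ^ 2"
    by (simp add: algebra_simps power2_eq_square)
  also have "\<dots> = x ^ (2 ^ Suc j) - w ^ (2 ^ Suc j)"
    by (simp add: power_mult[symmetric] mult.commute)
  finally show ?case .
qed simp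

lemma map_root_list:
  assumes "\<And>u v. f (u * v) = f u * f v"
  shows "map f (root_list c j w) = root_list (\<lambda>i. f (c i)) j (f w)"
  by (induction j arbitrary: w) (simp_all add: assms)

lemma length_root_list: "length (root_list c j w) = 2 ^ j"
  by (induction j arbitrary: w) simp_all

lemma root_list_Cons: "\<exists>xs. root_list c j w = w # xs"
proof (induction j arbitrary: w)
  case (Suc j)
  then obtain xs where "root_list c j w = w # xs" by blast
  then show ?case by simp
qed simp

primrec root_neg_one :: "nat \<Rightarrow> complex" where
  "root_neg_one 0 = -1"
| "root_neg_one (Suc j) = csqrt (root_neg_one j)"

lemma root_neg_one_power: "root_neg_one j ^ (2 ^ j) = -1"
proof (induction j)
  case (Suc j)
  have "root_neg_one (Suc j) ^ (2 ^ Suc j) = (csqrt (root_neg_one j) ^ 2) ^ (2 ^ j)"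
    by (simp add: power_mult)
  then show ?case using Suc by simp
qed simp

lemma norm_prod_list: "norm (prod_list (map f xs)) = prod_list (map (\<lambda>r. norm (f r :: 'a::real_normed_field)) xs)"
  by (induction xs) (simp_all add: norm_mult)

lemma prod_list_map_mult:
  "prod_list (map (\<lambda>r. f r * g r) xs) = prod_list (map f xs) * (prod_list (map g xs) :: 'a::comm_monoid_mult)"
  by (induction xs) (simp_all add: ac_simps)

lemma power_length_le_prod_list:
  assumes "\<And>r. r \<in> set xs \<Longrightarrow> m \<le> f r" "0 \<le> (m::real)"
  shows "m ^ length xs \<le> prod_list (map f xs)"
  using assms
proof (induction xs)
  case (Cons x xs)
  then have "m * m ^ length xs \<le> f x * prod_list (map f xs)"
    by (intro mult_mono) (auto intro: order_trans[of 0 m])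
  then show ?case by simp
qed simp

lemma norm_sum_squares_diff_le:
  fixes U V \<alpha> \<beta> :: "'k::real_normed_field"
  shows "norm ((U - \<alpha>)^2 + (V - \<beta>)^2)
    \<le> norm (U^2 + V^2) + 2 * (norm \<alpha> * norm U + norm \<beta> * norm V) + norm (\<alpha>^2 + \<beta>^2)"
proof -
  have "(U - \<alpha>)^2 + (V - \<beta>)^2 = (U^2 + V^2) - 2 * (\<alpha> * U) - 2 * (\<beta> * V) + (\<alpha>^2 + \<beta>^2)"
    by (simp add: power2_eq_square algebra_simps)
  then show ?thesis
    using norm_triangle_ineq4[of "U^2 + V^2" "2 * (\<alpha> * U)"] norm_triangle_ineq4[of "U^2 + V^2 - 2 * (\<alpha> * U)" "2 * (\<beta> * V)"]
      norm_triangle_ineq[of "U^2 + V^2 - 2 * (\<alpha> * U) - 2 * (\<beta> * V)" "\<alpha>^2 + \<beta>^2"]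
    by (simp add: norm_mult)
qed

lemma le_of_le_add_powers:
  fixes x m r1 r2 :: real
  assumes "\<And>j. x \<le> m + 2 * m * r1 ^ (2^j) + m * r2 ^ (2^j)"
    and "0 \<le> r1" "r1 < 1" "0 \<le> r2" "r2 < 1" "0 \<le> m"
  shows "x \<le> m"
proof -
  have pow: "(\<lambda>j. r ^ (2^j)) \<longlonglongrightarrow> 0" if "0 \<le> r" "r < 1" for r :: real
    using LIMSEQ_subseq_LIMSEQ[OF LIMSEQ_power_zero[of r], of "\<lambda>j. 2^j"] that
    by (simp add: strict_mono_def comp_def)
  have "(\<lambda>j. m + 2 * m * r1 ^ (2^j) + m * r2 ^ (2^j)) \<longlonglongrightarrow> m + 2 * m * 0 + m * 0"
    using assms(2-5) by (intro tendsto_intros pow)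
  then show ?thesis
    using assms(1) by (intro LIMSEQ_le_const) auto
qed

lemma exists_small_step:
  fixes m B :: real
  assumes "0 < m" "0 \<le> B"
  obtains \<delta> where "0 < \<delta>" "\<delta> * B < m" "\<delta>^2 < m"
proof
  define \<delta> where "\<delta> = min (m / (B + 1)) (sqrt m / 2)"
  show "0 < \<delta>" using assms by (simp add: \<delta>_def)
  have "\<delta> * B \<le> m / (B + 1) * B" using assms by (intro mult_right_mono) (auto simp: \<delta>_def)
  also have "\<dots> < m" using assms by (simp add: field_simps)
  finally show "\<delta> * B < m" .
  have "\<delta>^2 \<le> (sqrt m / 2)^2"
    using \<open>0 < \<delta>\<close> min.cobounded2[of "m / (B + 1)" "sqrt m / 2"] by (intro power_mono) (auto simp: \<delta>_def)
  then show "\<delta>^2 < m" using assms by (simp add: power_divide)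
qed

lemma exists_minimizer_of_max_norm:
  fixes f :: "'b::{real_normed_vector,heine_borel} \<Rightarrow> real"
  assumes cont: "continuous_on UNIV f" and far: "\<And>z. R < norm z \<Longrightarrow> f 0 < f z"
  obtains z0 where "\<And>z. f z0 \<le> f z" "\<And>z. f z = f z0 \<Longrightarrow> norm z \<le> norm z0"
proof -
  define K where "K = cball (0::'b) \<bar>R\<bar>"
  have out: "f 0 < f z" if "z \<notin> K" for z using far that by (simp add: K_def)
  have "compact K" "K \<noteq> {}" "continuous_on K f"
    using continuous_on_subset[OF cont] by (auto simp: K_def)
  then obtain z1 where z1: "z1 \<in> K" "\<And>z. z \<in> K \<Longrightarrow> f z1 \<le> f z"
    using continuous_attains_inf by metis
  have "0 \<in> K" by (simp add: K_def)
  have min: "f z1 \<le> f z" for z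
  proof (cases "z \<in> K")
    case False
    then show ?thesis using z1(2)[OF \<open>0 \<in> K\<close>] out[OF False] by linarith
  qed (use z1 in auto)
  define S where "S = {z. f z = f z1}"
  have "closed S" unfolding S_def by (rule closed_Collect_eq[OF cont continuous_on_const])
  moreover have "S \<subseteq> K"
  proof
    fix z assume "z \<in> S"
    then show "z \<in> K" using out[of z] min[of 0] by (cases "z \<in> K") (auto simp: S_def)
  qed
  ultimately have "compact S" using \<open>compact K\<close> by (metis bounded_subset compact_eq_bounded_closed)
  moreover have "S \<noteq> {}" by (auto simp: S_def)
  ultimately obtain z0 where "z0 \<in> S" "\<And>z. z \<in> S \<Longrightarrow> norm z \<le> norm z0"
    using continuous_attains_sup[of S norm] continuous_on_norm_id by blast
  then show ?thesis using that[of z0] min by (simp add: S_def)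
qed

context
  fixes a :: "'k::real_normed_field"
begin

text \<open>quad_at z = (a - z) * (a - cnj z), evaluated in 'k; a root z means that a satisfies a real
  quadratic equation.\<close>
definition quad_at :: "complex \<Rightarrow> 'k" where
  "quad_at z = (a - of_real (Re z))^2 + of_real ((Im z)^2)"

lemma cpx_of_quad_at: "cpx_of (quad_at z) = (cpx_of a - cpx_of_complex z) * cpx_cnj (cpx_of a - cpx_of_complex z)"
  by (simp add: cpx_eq_iff quad_at_def power2_eq_square algebra_simps)

lemma prod_list_quad_at_root_list:
  fixes z0 w :: complex
  defines "A \<equiv> cpx_of a - cpx_of_complex z0"
  shows "prod_list (map (\<lambda>r. quad_at (z0 + r)) (root_list root_neg_one j w))
     = (cpx_re (A ^ (2^j)) - of_real (Re (w ^ (2^j))))^2 + (cpx_im (A ^ (2^j)) - of_real (Im (w ^ (2^j))))^2"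
proof -
  define X where "X = A ^ (2^j) - cpx_of_complex (w ^ (2^j))"
  have roots: "prod_list (map (\<lambda>r. A - r) (root_list (\<lambda>i. cpx_of_complex (root_neg_one i)) j (cpx_of_complex w)))
      = A ^ (2^j) - cpx_of_complex w ^ (2^j)"
    by (rule prod_list_root_list)
      (simp add: cpx_of_complex_power[symmetric] root_neg_one_power cpx_of_complex_minus_one)
  have map: "map cpx_of_complex (root_list root_neg_one j w)
      = root_list (\<lambda>i. cpx_of_complex (root_neg_one i)) j (cpx_of_complex w :: 'k cpx)"
    by (rule map_root_list) (rule cpx_of_complex_mult)
  have X: "prod_list (map (\<lambda>r. A - cpx_of_complex r) (root_list root_neg_one j w)) = X"
    using roots unfolding X_def cpx_of_complex_power map[symmetric] by (simp add: comp_def)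
  have "cpx_of (prod_list (map (\<lambda>r. quad_at (z0 + r)) (root_list root_neg_one j w)))
      = prod_list (map (\<lambda>r. (A - cpx_of_complex r) * cpx_cnj (A - cpx_of_complex r)) (root_list root_neg_one j w))"
    unfolding cpx_of_prod_list cpx_of_quad_at A_def cpx_of_complex_add by (simp add: algebra_simps)
  also have "\<dots> = X * cpx_cnj X"
    unfolding prod_list_map_mult X cpx_cnj_prod_list[symmetric] ..
  finally have "prod_list (map (\<lambda>r. quad_at (z0 + r)) (root_list root_neg_one j w)) = cpx_re (X * cpx_cnj X)"
    by (metis cpx_of_simps(1))
  then show ?thesis
    by (simp add: X_def power2_eq_square algebra_simps)
qed

lemma quad_at_power:
  fixes z0 :: complex
  defines "A \<equiv> cpx_of a - cpx_of_complex z0"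
  shows "quad_at z0 ^ n = cpx_re (A ^ n)^2 + cpx_im (A ^ n)^2"
proof -
  have "cpx_of (quad_at z0 ^ n) = (A * cpx_cnj A) ^ n"
    by (simp add: cpx_of_power cpx_of_quad_at A_def)
  also have "\<dots> = A ^ n * cpx_cnj (A ^ n)"
    by (simp add: power_mult_distrib cpx_cnj_power)
  finally have "quad_at z0 ^ n = cpx_re (A ^ n * cpx_cnj (A ^ n))"
    by (metis cpx_of_simps(1))
  then show ?thesis
    by (simp add: power2_eq_square)
qed

lemma norm_quad_at_mult_power_le_prod:
  assumes min: "\<And>z. m \<le> norm (quad_at z)" and m: "0 < m"
  shows "norm (quad_at (z0 + w)) * m ^ (2^j - 1)
    \<le> norm (prod_list (map (\<lambda>r. quad_at (z0 + r)) (root_list root_neg_one j w)))"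
proof -
  obtain xs where xs: "root_list root_neg_one j w = w # xs" using root_list_Cons by blast
  have "length xs = 2^j - 1" using length_root_list[of root_neg_one j w] unfolding xs by simp
  then have "m ^ (2^j - 1) \<le> prod_list (map (\<lambda>r. norm (quad_at (z0 + r))) xs)"
    using power_length_le_prod_list[of xs m "\<lambda>r. norm (quad_at (z0 + r))"] min m by auto
  then show ?thesis
    by (simp add: xs norm_prod_list norm_mult mult_left_mono)
qed

lemma norm_quad_at_power_le:
  fixes z0 w :: complex and m :: real
  assumes min: "\<And>z. m \<le> norm (quad_at z)" and m: "0 < m" and z0: "norm (quad_at z0) = m"
  defines "B \<equiv> norm a + \<bar>Re z0\<bar> + \<bar>Im z0\<bar>"
  shows "norm (quad_at (z0 + w)) * m ^ (2^j - 1) \<le> m ^ (2^j) + 2 * (cmod w * B) ^ (2^j) + (cmod w ^ 2) ^ (2^j)"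
proof -
  define N :: nat where "N = 2^j"
  define A where "A = cpx_of a - cpx_of_complex z0"
  define U V where "U = cpx_re (A ^ N)" "V = cpx_im (A ^ N)"
  define \<alpha> \<beta> :: 'k where "\<alpha> = of_real (Re (w ^ N))" "\<beta> = of_real (Im (w ^ N))"
  have "norm (quad_at (z0 + w)) * m ^ (N - 1) \<le> norm ((U - \<alpha>)^2 + (V - \<beta>)^2)"
    using norm_quad_at_mult_power_le_prod[OF min m, of z0 w j]
    unfolding prod_list_quad_at_root_list U_V_def \<alpha>_\<beta>_def A_def N_def .
  also have "\<dots> \<le> norm (U^2 + V^2) + 2 * (norm \<alpha> * norm U + norm \<beta> * norm V) + norm (\<alpha>^2 + \<beta>^2)"
    by (rule norm_sum_squares_diff_le)
  finally have bound: "norm (quad_at (z0 + w)) * m ^ (N - 1)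
      \<le> norm (U^2 + V^2) + 2 * (norm \<alpha> * norm U + norm \<beta> * norm V) + norm (\<alpha>^2 + \<beta>^2)" .
  have "U^2 + V^2 = quad_at z0 ^ N"
    using quad_at_power[of z0 N] by (simp add: U_V_def A_def)
  then have UV: "norm (U^2 + V^2) = m ^ N" using z0 by (simp add: norm_power)
  have "\<alpha>^2 + \<beta>^2 = of_real ((cmod (w ^ N))^2)"
    by (simp add: \<alpha>_\<beta>_def cmod_power2)
  then have \<alpha>\<beta>: "norm (\<alpha>^2 + \<beta>^2) = (cmod w ^ 2) ^ N"
    by (simp add: norm_power power_mult[symmetric] mult.commute)
  have "norm \<alpha> \<le> cmod w ^ N" "norm \<beta> \<le> cmod w ^ N"
    unfolding \<alpha>_\<beta>_def norm_of_real using abs_Re_le_cmod[of "w ^ N"] abs_Im_le_cmod[of "w ^ N"]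
    by (simp_all add: norm_power)
  then have "norm \<alpha> * norm U + norm \<beta> * norm V \<le> cmod w ^ N * (norm U + norm V)"
    by (simp add: distrib_left add_mono mult_right_mono)
  also have "\<dots> \<le> cmod w ^ N * B ^ N"
  proof (intro mult_left_mono)
    have "norm (cpx_re A) \<le> norm a + \<bar>Re z0\<bar>"
      unfolding A_def using norm_triangle_ineq4[of a "of_real (Re z0)"] by simp
    then have "norm (cpx_re A) + norm (cpx_im A) \<le> B" by (simp add: A_def B_def)
    then have "(norm (cpx_re A) + norm (cpx_im A)) ^ N \<le> B ^ N" by (intro power_mono) auto
    then show "norm U + norm V \<le> B ^ N"
      unfolding U_V_def using cpx_norm_power_le[of A N] by linarith
  qed simp
  finally have "norm \<alpha> * norm U + norm \<beta> * norm V \<le> (cmod w * B) ^ N"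
    by (simp add: power_mult_distrib)
  with bound UV \<alpha>\<beta> show ?thesis by (simp add: N_def)
qed


lemma norm_quad_at_near_minimizer_le:
  fixes z0 w :: complex and m :: real
  assumes min: "\<And>z. m \<le> norm (quad_at z)" and m: "0 < m" and z0: "norm (quad_at z0) = m"
    and small: "cmod w * (norm a + \<bar>Re z0\<bar> + \<bar>Im z0\<bar>) < m" "cmod w ^ 2 < m"
  shows "norm (quad_at (z0 + w)) \<le> m"
proof -
  define B where "B = norm a + \<bar>Re z0\<bar> + \<bar>Im z0\<bar>"
  have "norm (quad_at (z0 + w)) \<le> m + 2 * m * ((cmod w * B) / m) ^ (2^j) + m * ((cmod w ^ 2) / m) ^ (2^j)"
    for j :: nat
  proof -
    define N :: nat where "N = 2^j"
    have "N = Suc (N - 1)" by (simp add: N_def)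
    then have N: "m ^ N = m * m ^ (N - 1)" by (metis power_Suc)
    have e: "\<And>p. p ^ N = m * (p / m) ^ N * m ^ (N - 1)"
      using m by (simp add: power_divide N)
    have "norm (quad_at (z0 + w)) * m ^ (N - 1) \<le> m ^ N + 2 * (cmod w * B) ^ N + (cmod w ^ 2) ^ N"
      using norm_quad_at_power_le[OF min m z0, of w j] by (simp add: B_def N_def)
    also have "\<dots> = (m + 2 * m * ((cmod w * B) / m) ^ N + m * ((cmod w ^ 2) / m) ^ N) * m ^ (N - 1)"
      by (subst e, subst e, subst N) (simp add: algebra_simps)
    finally show ?thesis
      using m by (simp add: N_def)
  qed
  then show ?thesis
    by (rule le_of_le_add_powers) (use m small in \<open>auto simp: B_def\<close>)
qed

lemma norm_quad_at_zero_less: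
  assumes "3 * norm a + 1 < cmod z"
  shows "norm (quad_at 0) < norm (quad_at z)"
proof -
  define s r where "s = Re z" "r = cmod z"
  define c where "c = a * a - 2 * of_real s * a"
  have "quad_at z = c + of_real (s^2 + (Im z)^2)"
    by (simp add: quad_at_def s_r_def c_def power2_eq_square algebra_simps)
  also have "s^2 + (Im z)^2 = r^2" by (simp add: s_r_def cmod_power2)
  finally have "r^2 = norm (quad_at z - c)" by (simp add: norm_power)
  also have "\<dots> \<le> norm (quad_at z) + norm c" by (rule norm_triangle_ineq4)
  also have "norm c \<le> norm a * norm a + 2 * (\<bar>s\<bar> * norm a)"
    using norm_triangle_ineq4[of "a * a" "2 * of_real s * a"] by (simp add: c_def norm_mult)
  finally have lower: "r * r - norm a * norm a - 2 * (\<bar>s\<bar> * norm a) \<le> norm (quad_at z)"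
    by (simp add: power2_eq_square)
  have r: "3 * norm a + 1 < r" using assms by (simp add: s_r_def)
  then have "0 \<le> r" using norm_ge_zero[of a] by linarith
  have "\<bar>s\<bar> * norm a \<le> r * norm a" using abs_Re_le_cmod by (simp add: s_r_def mult_right_mono)
  moreover have "r * (3 * norm a + 1) \<le> r * r" using r \<open>0 \<le> r\<close> by (intro mult_left_mono) auto
  then have "3 * (r * norm a) + r \<le> r * r" by (simp add: algebra_simps)
  moreover have "(3 * norm a + 1) * norm a \<le> r * norm a" using r by (intro mult_right_mono) auto
  then have "3 * (norm a * norm a) + norm a \<le> r * norm a" by (simp add: algebra_simps)
  moreover have "norm (quad_at 0) = norm a * norm a"
    by (simp add: quad_at_def norm_power power2_eq_square norm_mult)
  ultimately show ?thesis
    using lower r norm_ge_zero[of a] zero_le_square[of "norm a"] by linarith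
qed

lemma quad_at_root: "\<exists>z. quad_at z = 0"
proof (rule ccontr)
  assume no_root: "\<nexists>z. quad_at z = 0"
  have "continuous_on UNIV (\<lambda>z. norm (quad_at z))"
    unfolding quad_at_def by (intro continuous_intros)
  then obtain z0 where min: "\<And>z. norm (quad_at z0) \<le> norm (quad_at z)"
    and max: "\<And>z. norm (quad_at z) = norm (quad_at z0) \<Longrightarrow> cmod z \<le> cmod z0"
    using exists_minimizer_of_max_norm norm_quad_at_zero_less by blast
  define m B where "m = norm (quad_at z0)" "B = norm a + \<bar>Re z0\<bar> + \<bar>Im z0\<bar>"
  have m: "0 < m" using no_root by (simp add: m_B_def)
  have B: "0 \<le> B" by (simp add: m_B_def)
  obtain \<delta> where \<delta>: "0 < \<delta>" and \<delta>B: "\<delta> * B < m" and \<delta>2: "\<delta>^2 < m"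
    using exists_small_step[OF m B] by blast
  text \<open>Moving from z0 radially outwards by \<delta> keeps the minimal value of norm \<circ> quad_at,
    contradicting the maximality of cmod z0.\<close>
  define u where "u = (if z0 = 0 then 1 else sgn z0)"
  have u: "cmod u = 1" "z0 = of_real (cmod z0) * u" by (auto simp: u_def norm_sgn sgn_eq norm_divide)
  define w where "w = of_real \<delta> * u"
  have "cmod w = \<delta>" using \<delta> u by (simp add: w_def norm_mult)
  then have "norm (quad_at (z0 + w)) \<le> m"
    using min m \<delta>B \<delta>2 by (intro norm_quad_at_near_minimizer_le) (auto simp: m_B_def)
  then have "cmod (z0 + w) \<le> cmod z0" using min max by (simp add: m_B_def antisym)
  moreover have "z0 + w = of_real (cmod z0 + \<delta>) * u"
    by (subst u(2)) (simp add: w_def algebra_simps)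
  then have "cmod (z0 + w) = \<bar>cmod z0 + \<delta>\<bar>" by (simp only: norm_mult norm_of_real u(1) mult_1_right)
  ultimately show False using \<delta> by simp
qed

end

lemma real_normed_field_real_quadratic:
  fixes b :: "'k::real_normed_field"
  obtains x y where "(b - of_real x)^2 = - ((of_real y)^2)"
proof -
  obtain z where "quad_at b z = 0" using quad_at_root by blast
  then have "(b - of_real (Re z))^2 = - ((of_real (Im z))^2)"
    unfolding quad_at_def by (simp add: eq_neg_iff_add_eq_0)
  then show ?thesis by (rule that)
qed

lemma real_normed_field_cases:
  obtains (real) "\<And>b::'k::real_normed_field. b \<in> \<real>"
  | (complex) i :: "'k::real_normed_field" where "i * i = -1" "\<And>c. \<exists>x y. c = of_real x + of_real y * i"
proof (cases "\<forall>b::'k. b \<in> \<real>")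
  case False
  then obtain b :: 'k where b: "b \<notin> \<real>" by blast
  obtain s t where st: "(b - of_real s)^2 = - ((of_real t)^2)" using real_normed_field_real_quadratic by blast
  have "t \<noteq> 0"
  proof
    assume "t = 0"
    then have "b = of_real s" using st by simp
    then show False using b by simp
  qed
  define i where "i = (b - of_real s) / of_real t"
  have i: "i * i = -1"
    using st \<open>t \<noteq> 0\<close> unfolding i_def by (simp add: power2_eq_square field_simps)
  have "\<exists>x y. c = of_real x + of_real y * i" for c
  proof -
    obtain x y where xy: "(c - of_real x)^2 = - ((of_real y)^2)" using real_normed_field_real_quadratic by blast
    have "(c - of_real x - of_real y * i) * (c - of_real x + of_real y * i) = (c - of_real x)^2 - (of_real y)^2 * (i * i)"
      by (simp add: power2_eq_square algebra_simps)
    also have "\<dots> = 0" using xy i by simp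
    finally have "c - of_real x - of_real y * i = 0 \<or> c - of_real x + of_real y * i = 0"
      by simp
    then have "c = of_real x + of_real y * i \<or> c = of_real x + of_real (- y) * i"
      by (auto simp: algebra_simps)
    then show ?thesis by blast
  qed
  with i show ?thesis by (rule complex)
qed (use real in blast)

lemma abs_add_abs_le_norm_real_imag:
  fixes i :: "'k::real_normed_field"
  assumes i: "i * i = -1"
  shows "\<bar>x\<bar> + \<bar>y\<bar> \<le> 2 * norm (of_real x + of_real y * i :: 'k)"
proof -
  have "norm i * norm i = 1" using i by (simp flip: norm_mult)
  then have "sqrt (norm i * norm i) = 1" by simp
  then have ni: "norm i = 1" by simp
  have "(of_real x + of_real y * i) * (of_real x - of_real y * i) = (of_real x * of_real x - of_real y * of_real y * (i * i) :: 'k)"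
    by (simp add: algebra_simps)
  also have "\<dots> = of_real (x^2 + y^2)" using i by (simp add: power2_eq_square)
  finally have "(of_real x + of_real y * i) * (of_real x - of_real y * i) = (of_real (x^2 + y^2) :: 'k)" .
  then have "x^2 + y^2 = norm (of_real x + of_real y * i :: 'k) * norm (of_real x - of_real y * i :: 'k)"
    by (metis norm_mult norm_of_real abs_of_nonneg sum_power2_ge_zero)
  also have "\<dots> \<le> norm (of_real x + of_real y * i :: 'k) * (\<bar>x\<bar> + \<bar>y\<bar>)"
    using norm_triangle_ineq4[of "of_real x :: 'k" "of_real y * i"] ni
    by (intro mult_left_mono) (auto simp: norm_mult)
  finally have "x^2 + y^2 \<le> norm (of_real x + of_real y * i :: 'k) * (\<bar>x\<bar> + \<bar>y\<bar>)" .
  moreover have "(\<bar>x\<bar> + \<bar>y\<bar>) * (\<bar>x\<bar> + \<bar>y\<bar>) \<le> 2 * (x^2 + y^2)"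
    using zero_le_square[of "\<bar>x\<bar> - \<bar>y\<bar>"] by (simp add: power2_eq_square algebra_simps abs_mult_self_eq)
  ultimately have "(\<bar>x\<bar> + \<bar>y\<bar>) * (\<bar>x\<bar> + \<bar>y\<bar>) \<le> (2 * norm (of_real x + of_real y * i :: 'k)) * (\<bar>x\<bar> + \<bar>y\<bar>)"
    by (simp add: algebra_simps)
  then show ?thesis
    by (cases "\<bar>x\<bar> + \<bar>y\<bar> = 0") (auto simp: mult_le_cancel_right add_nonneg_eq_0_iff)
qed

lemma Cauchy_if_dist_le:
  assumes "Cauchy f" and le: "\<And>m n. dist (g m) (g n) \<le> K * dist (f m) (f n)"
  shows "Cauchy g"
proof (rule metric_CauchyI)
  fix \<epsilon> :: real assume "0 < \<epsilon>"
  then obtain M where M: "\<forall>m\<ge>M. \<forall>n\<ge>M. dist (f m) (f n) < \<epsilon> / (\<bar>K\<bar> + 1)"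
    using \<open>Cauchy f\<close> unfolding Cauchy_def by (metis divide_pos_pos zero_less_one add_nonneg_pos abs_ge_zero)
  have "dist (g m) (g n) < \<epsilon>" if "M \<le> m" "M \<le> n" for m n
  proof -
    have "K * dist (f m) (f n) \<le> (\<bar>K\<bar> + 1) * dist (f m) (f n)"
      using abs_ge_self[of K] by (intro mult_right_mono) auto
    then have "dist (g m) (g n) \<le> (\<bar>K\<bar> + 1) * dist (f m) (f n)"
      using le[of m n] by linarith
    also have "\<dots> < (\<bar>K\<bar> + 1) * (\<epsilon> / (\<bar>K\<bar> + 1))"
      using M that by (intro mult_strict_left_mono) auto
    finally show ?thesis by simp
  qed
  then show "\<exists>M. \<forall>m\<ge>M. \<forall>n\<ge>M. dist (g m) (g n) < \<epsilon>" by blast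
qed

lemma Cauchy_convergent_if_imaginary_unit:
  fixes f :: "nat \<Rightarrow> 'k::real_normed_field" and i :: 'k
  assumes i: "i * i = -1" and decomp: "\<And>c. \<exists>x y. c = of_real x + of_real y * i" and "Cauchy f"
  shows "convergent f"
proof -
  define p q where "p n = fst (SOME pq. f n = of_real (fst pq) + of_real (snd pq) * i)"
    and "q n = snd (SOME pq. f n = of_real (fst pq) + of_real (snd pq) * i)" for n
  have fpq: "f n = of_real (p n) + of_real (q n) * i" for n
  proof -
    have "\<exists>pq. f n = of_real (fst pq) + of_real (snd pq) * i" using decomp[of "f n"] by auto
    then show ?thesis unfolding p_def q_def by (rule someI_ex)
  qed
  have diff: "dist (p m) (p n) \<le> 2 * dist (f m) (f n) \<and> dist (q m) (q n) \<le> 2 * dist (f m) (f n)" for m n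
  proof -
    have "f m - f n = of_real (p m - p n) + of_real (q m - q n) * i"
      unfolding fpq by (simp add: algebra_simps)
    then have "\<bar>p m - p n\<bar> + \<bar>q m - q n\<bar> \<le> 2 * dist (f m) (f n)"
      using abs_add_abs_le_norm_real_imag[OF i, of "p m - p n" "q m - q n"] by (simp add: dist_norm)
    then show ?thesis
      unfolding dist_real_def using abs_ge_zero[of "p m - p n"] abs_ge_zero[of "q m - q n"]
      by (intro conjI) linarith+
  qed
  have "Cauchy p"
    using \<open>Cauchy f\<close> by (rule Cauchy_if_dist_le[where K = 2]) (use diff in blast)
  moreover have "Cauchy q"
    using \<open>Cauchy f\<close> by (rule Cauchy_if_dist_le[where K = 2]) (use diff in blast)
  ultimately obtain P R where "p \<longlonglongrightarrow> P" "q \<longlonglongrightarrow> R"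
    using Cauchy_convergent_iff convergent_def by blast
  then have "(\<lambda>n. of_real (p n) + of_real (q n) * i :: 'k) \<longlonglongrightarrow> of_real P + of_real R * i"
    by (intro tendsto_intros)
  then show ?thesis unfolding fpq[symmetric] convergent_def by blast
qed

lemma real_normed_field_Cauchy_convergent:
  fixes f :: "nat \<Rightarrow> 'k::real_normed_field"
  assumes "Cauchy f"
  shows "convergent f"
proof (cases rule: real_normed_field_cases[where 'k='k])
  case real
  define g where "g n = (SOME r. f n = of_real r)" for n
  have fg: "f n = of_real (g n)" for n
  proof -
    have "\<exists>r. f n = of_real r" using real[of "f n"] by (auto elim: Reals_cases)
    then show ?thesis unfolding g_def by (rule someI_ex)
  qed
  have "Cauchy g"
    using assms by (rule Cauchy_if_dist_le[where K = 1]) (simp add: fg dist_norm flip: of_real_diff)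
  then have "(\<lambda>n. of_real (g n) :: 'k) \<longlonglongrightarrow> of_real (lim g)"
    by (intro tendsto_of_real) (simp add: Cauchy_convergent_iff convergent_LIMSEQ_iff)
  then show ?thesis unfolding fg[symmetric] convergent_def by blast
next
  case (complex i)
  then show ?thesis using assms by (rule Cauchy_convergent_if_imaginary_unit)
qed

section \<open>Coordinate projections of a Schauder basis\<close>

locale seminormalized_schauder_basis =
  fixes sc :: "'k::real_normed_field \<Rightarrow> 'a::banach \<Rightarrow> 'a" and e :: "nat \<Rightarrow> 'a"
  assumes scalar_action: "normed_scalar_action sc"
    and basis: "schauder_basis sc e"
    and semi_normalized: "semi_normalized e"
begin

lemma sc_add_left: "sc (a + b) x = sc a x + sc b x"
  and sc_add_right: "sc a (x + y) = sc a x + sc a y"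
  and sc_mult: "sc (a * b) x = sc a (sc b x)"
  and sc_one: "sc 1 x = x"
  and sc_of_real: "sc (of_real r) x = scaleR r x"
  and norm_sc: "norm (sc a x) = norm a * norm x"
  using scalar_action unfolding normed_scalar_action_def by blast+

lemma sc_zero_left [simp]: "sc 0 x = 0"
  using sc_of_real[of 0 x] by simp

lemma sc_sum_right: "sc a (\<Sum>i\<in>I. f i) = (\<Sum>i\<in>I. sc a (f i))"
  by (induction I rule: infinite_finite_induct) (simp_all add: sc_add_right norm_sc flip: norm_eq_zero)

lemma bounded_linear_sc: "bounded_linear (sc a)"
  by (rule bounded_linear_intro[of _ "norm a"])
    (simp_all add: sc_add_right norm_sc sc_of_real[symmetric] flip: sc_mult mult.commute)

lemma bounded_linear_sc_left: "bounded_linear (\<lambda>c. sc c x)"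
  by (rule bounded_linear_intro[of _ "norm x"])
    (simp_all add: sc_add_left scaleR_conv_of_real sc_mult sc_of_real norm_sc)

lemmas tendsto_sc = bounded_linear.tendsto[OF bounded_linear_sc]
lemmas tendsto_sc_left = bounded_linear.tendsto[OF bounded_linear_sc_left]

definition S :: "nat \<Rightarrow> 'a \<Rightarrow> 'a" where
  "S n x = (\<Sum>k<n. sc (coord sc e k x) (e k))"

lemma coord_eqI:
  assumes "(\<lambda>n. \<Sum>k<n. sc (c k) (e k)) \<longlonglongrightarrow> x"
  shows "coord sc e j x = c j"
proof -
  have "\<exists>!c. (\<lambda>n. \<Sum>k<n. sc (c k) (e k)) \<longlonglongrightarrow> x"
    using basis unfolding schauder_basis_def by blast
  then have "(THE c. (\<lambda>n. \<Sum>k<n. sc (c k) (e k)) \<longlonglongrightarrow> x) = c"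
    using assms by (blast intro: the1_equality)
  then show ?thesis unfolding coord_def by simp
qed

lemma LIMSEQ_S: "(\<lambda>n. S n x) \<longlonglongrightarrow> x"
proof -
  have "\<exists>!c. (\<lambda>n. \<Sum>k<n. sc (c k) (e k)) \<longlonglongrightarrow> x"
    using basis unfolding schauder_basis_def by blast
  from theI'[OF this] show ?thesis unfolding S_def coord_def .
qed

lemma coord_finite_sum:
  assumes "finite F"
  shows "coord sc e j (\<Sum>i\<in>F. sc (c i) (e i)) = (if j \<in> F then c j else 0)"
proof -
  define c' where "c' k = (if k \<in> F then c k else 0)" for k
  obtain n0 where "F \<subseteq> {..<n0}" using finite_nat_bounded[OF assms] by blast
  have "(\<Sum>k<n. sc (c' k) (e k)) = (\<Sum>i\<in>F. sc (c i) (e i))" if "n0 \<le> n" for n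
  proof -
    have "(\<Sum>k<n. sc (c' k) (e k)) = (\<Sum>k<n. if k \<in> F then sc (c k) (e k) else 0)"
      by (intro sum.cong) (auto simp: c'_def)
    also have "\<dots> = (\<Sum>k\<in>{..<n} \<inter> F. sc (c k) (e k))"
      by (simp add: sum.inter_restrict)
    also have "{..<n} \<inter> F = F" using \<open>F \<subseteq> {..<n0}\<close> that by auto
    finally show ?thesis .
  qed
  then have "(\<lambda>n. \<Sum>k<n. sc (c' k) (e k)) \<longlonglongrightarrow> (\<Sum>i\<in>F. sc (c i) (e i))"
    by (intro Lim_transform_eventually[OF tendsto_const]) (metis (mono_tags) eventually_sequentiallyI)
  then show ?thesis by (simp add: coord_eqI c'_def)
qed

lemma coord_add: "coord sc e j (x + y) = coord sc e j x + coord sc e j y"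
proof -
  have "(\<lambda>n. S n x + S n y) \<longlonglongrightarrow> x + y" by (intro tendsto_intros LIMSEQ_S)
  then show ?thesis
    by (intro coord_eqI) (simp add: S_def sc_add_left sum.distrib)
qed

lemma coord_sc: "coord sc e j (sc a x) = a * coord sc e j x"
proof -
  have "(\<lambda>n. sc a (S n x)) \<longlonglongrightarrow> sc a x" by (intro tendsto_sc LIMSEQ_S)
  then show ?thesis
    by (intro coord_eqI) (simp add: S_def sc_sum_right sc_mult)
qed

lemma linear_coord: "linear (coord sc e j)"
  by (rule linearI) (simp_all add: coord_add scaleR_conv_of_real flip: coord_sc sc_of_real)

abbreviation P :: "nat set \<Rightarrow> 'a \<Rightarrow> 'a" where
  "P A x \<equiv> greedy_sum sc e x A"

lemma P_eq: "P A x = (\<Sum>j\<in>A. sc (coord sc e j x) (e j))"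
  by (simp add: greedy_sum_def)

lemma S_eq_P: "S n x = P {..<n} x"
  by (simp add: S_def P_eq)

lemma linear_P: "linear (P A)"
  unfolding greedy_sum_def
  using linear_compose[OF linear_coord bounded_linear.linear[OF bounded_linear_sc_left]]
  by (intro linear_compose_sum ballI) (simp add: comp_def)

lemma P_sc: "P A (sc a x) = sc a (P A x)"
  by (simp add: P_eq coord_sc sc_mult sc_sum_right)

lemma coord_P: "finite B \<Longrightarrow> coord sc e j (P B x) = (if j \<in> B then coord sc e j x else 0)"
  unfolding P_eq by (rule coord_finite_sum)

lemma P_P:
  assumes "finite A" "finite B"
  shows "P A (P B x) = P (A \<inter> B) x"
proof -
  have "P A (P B x) = (\<Sum>j\<in>A. if j \<in> B then sc (coord sc e j x) (e j) else 0)"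
    unfolding P_eq[of _ A] coord_P[OF assms(2)] by (intro sum.cong) auto
  also have "\<dots> = P (A \<inter> B) x"
    using assms(1) by (simp add: sum.inter_restrict P_eq)
  finally show ?thesis .
qed

lemma P_union: "A \<inter> B = {} \<Longrightarrow> finite A \<Longrightarrow> finite B \<Longrightarrow> P (A \<union> B) x = P A x + P B x"
  by (simp add: P_eq sum.union_disjoint)

lemma norm_coord_le:
  obtains a0 where "0 < a0" "\<And>j x. norm (coord sc e j x) \<le> norm (P {j} x) / a0"
proof -
  obtain a0 where a0: "0 < a0" "\<And>n. a0 \<le> norm (e n)"
    using semi_normalized unfolding semi_normalized_def by blast
  have "norm (coord sc e j x) * a0 \<le> norm (P {j} x)" for j x
    using a0 by (simp add: P_eq norm_sc mult_left_mono)
  with a0 show ?thesis using that by (simp add: field_simps)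
qed

context
  fixes N :: "'a \<Rightarrow> real"
  assumes equivalent: "equivalent_norm sc N"
begin

lemma N_sc: "N (sc a x) = norm a * N x"
  and N_triangle: "N (x + y) \<le> N x + N y"
  using equivalent unfolding equivalent_norm_def is_norm_over_def by blast+

lemma N_bounds:
  obtains c C where "0 < c" "0 < C" "\<And>x. c * norm x \<le> N x" "\<And>x. N x \<le> C * norm x"
  using equivalent unfolding equivalent_norm_def by blast

lemma N_scaleR: "N (scaleR r x) = \<bar>r\<bar> * N x"
  using N_sc[of "of_real r" x] by (simp add: sc_of_real)

lemma N_zero [simp]: "N 0 = 0"
  using N_scaleR[of 0 0] by simp

lemma N_nonneg: "0 \<le> N x"
  using N_triangle[of x "-x"] N_scaleR[of "-1" x] by simp

lemma N_tendsto:
  assumes "f \<longlonglongrightarrow> L"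
  shows "(\<lambda>n. N (f n)) \<longlonglongrightarrow> N L"
proof -
  obtain C where C: "\<And>x. N x \<le> C * norm x" using N_bounds by metis
  have bound: "norm (N y - N L) \<le> C * norm (y - L)" for y
  proof -
    have "N y \<le> N (y - L) + N L" "N L \<le> N (L - y) + N y"
      using N_triangle[of "y - L" L] N_triangle[of "L - y" y] by simp_all
    moreover have "N (L - y) = N (y - L)" using N_scaleR[of "-1" "y - L"] by simp
    ultimately show ?thesis using C[of "y - L"] by (simp add: abs_le_iff)
  qed
  have "(\<lambda>n. f n - L) \<longlonglongrightarrow> 0" using assms by (simp add: LIM_zero)
  then have "(\<lambda>n. C * norm (f n - L)) \<longlonglongrightarrow> 0"
    using tendsto_mult_right_zero tendsto_norm_zero by blast
  then have "(\<lambda>n. N (f n) - N L) \<longlonglongrightarrow> 0"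
    by (rule Lim_null_comparison[OF always_eventually, rotated]) (use bound in blast)
  then show ?thesis by (simp add: LIM_zero_iff)
qed

lemma N_le_add_if_le_add_scaled:
  assumes "0 < \<epsilon>" "\<epsilon> \<le> 1" "N u \<le> N (u + scaleR \<epsilon> v)"
  shows "N u \<le> N (u + v)"
proof -
  have "u + scaleR \<epsilon> v = scaleR (1 - \<epsilon>) u + scaleR \<epsilon> (u + v)"
    by (simp add: algebra_simps)
  then have "N u \<le> N (scaleR (1 - \<epsilon>) u + scaleR \<epsilon> (u + v))"
    using assms(3) by simp
  also have "\<dots> \<le> N (scaleR (1 - \<epsilon>) u) + N (scaleR \<epsilon> (u + v))"
    by (rule N_triangle)
  also have "\<dots> = (1 - \<epsilon>) * N u + \<epsilon> * N (u + v)"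
    using assms(1,2) by (simp add: N_scaleR)
  finally have "\<epsilon> * N u \<le> \<epsilon> * N (u + v)"
    by (simp add: algebra_simps)
  then show ?thesis using assms(1) by simp
qed

section \<open>One-quasi-greedy bases are unconditional\<close>

context
  assumes quasi_greedy: "one_quasi_greedy sc e N"
begin

lemma qg_N_le_add_small:
  assumes F: "finite F" and j: "j \<notin> F" and small: "\<And>i. i \<in> F \<Longrightarrow> norm t \<le> norm (c i)"
  shows "N (\<Sum>i\<in>F. sc (c i) (e i)) \<le> N ((\<Sum>i\<in>F. sc (c i) (e i)) + sc t (e j))"
proof -
  define v where "v = (\<Sum>i\<in>F. sc (c i) (e i)) + sc t (e j)"
  have "(\<Sum>i\<in>F. sc ((c(j := t)) i) (e i)) = (\<Sum>i\<in>F. sc (c i) (e i))"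
    using j by (intro sum.cong) auto
  then have "v = (\<Sum>i\<in>insert j F. sc ((c(j := t)) i) (e i))"
    using F j by (simp add: v_def add.commute)
  then have coord_v: "coord sc e l v = (if l \<in> insert j F then (c(j := t)) l else 0)" for l
    using F by (simp add: coord_finite_sum)
  have "greedy_set sc e v (card F) F"
    unfolding greedy_set_def using F j small by (auto simp: coord_v)
  then have "N (greedy_sum sc e v F) \<le> N v"
    using quasi_greedy unfolding one_quasi_greedy_def by blast
  moreover have "greedy_sum sc e v F = (\<Sum>i\<in>F. sc (c i) (e i))"
    unfolding greedy_sum_def using j by (intro sum.cong) (auto simp: coord_v)
  ultimately show ?thesis by (simp add: v_def)
qed

lemma qg_N_le_add:
  assumes F: "finite F" and j: "j \<notin> F"
  shows "N (\<Sum>i\<in>F. sc (c i) (e i)) \<le> N ((\<Sum>i\<in>F. sc (c i) (e i)) + sc t (e j))"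
proof -
  define F' where "F' = {i\<in>F. c i \<noteq> 0}"
  have F': "finite F'" "j \<notin> F'" using F j by (auto simp: F'_def)
  have "(\<Sum>i\<in>F. sc (c i) (e i)) = (\<Sum>i\<in>F'. sc (c i) (e i))"
    unfolding F'_def using F by (intro sum.mono_neutral_right) auto
  moreover have "N (\<Sum>i\<in>F'. sc (c i) (e i)) \<le> N ((\<Sum>i\<in>F'. sc (c i) (e i)) + sc t (e j))"
  proof (cases "F' = {} \<or> t = 0")
    case True
    then show ?thesis using N_nonneg by auto
  next
    case False
    text \<open>Shrink t below every nonzero coefficient, so that F' stays a greedy set.\<close>
    define \<epsilon> where "\<epsilon> = min 1 (Min (norm ` c ` F') / norm t)"
    have "0 < Min (norm ` c ` F')" using F' False by (subst Min_gr_iff) (auto simp: F'_def)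
    then have \<epsilon>: "0 < \<epsilon>" "\<epsilon> \<le> 1" using False by (auto simp: \<epsilon>_def)
    have small: "norm (of_real \<epsilon> * t) \<le> norm (c i)" if "i \<in> F'" for i
    proof -
      have "norm (of_real \<epsilon> * t) = \<epsilon> * norm t" using \<epsilon> by (simp add: norm_mult)
      also have "\<dots> \<le> Min (norm ` c ` F') / norm t * norm t"
        by (intro mult_right_mono) (auto simp: \<epsilon>_def)
      also have "\<dots> \<le> norm (c i)" using False that F'(1) by simp
      finally show ?thesis .
    qed
    have "N (\<Sum>i\<in>F'. sc (c i) (e i)) \<le> N ((\<Sum>i\<in>F'. sc (c i) (e i)) + sc (of_real \<epsilon> * t) (e j))"
      by (rule qg_N_le_add_small[OF F' small])
    then have "N (\<Sum>i\<in>F'. sc (c i) (e i)) \<le> N ((\<Sum>i\<in>F'. sc (c i) (e i)) + scaleR \<epsilon> (sc t (e j)))"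
      by (simp add: sc_mult sc_of_real)
    then show ?thesis using \<epsilon> by (rule N_le_add_if_le_add_scaled[rotated 2])
  qed
  ultimately show ?thesis by (simp only:)
qed

lemma qg_N_sum_diff_le:
  assumes "finite F" "finite D"
  shows "N (\<Sum>i\<in>F - D. sc (c i) (e i)) \<le> N (\<Sum>i\<in>F. sc (c i) (e i))"
  using assms(2)
proof (induction D rule: finite_induct)
  case (insert d D)
  show ?case
  proof (cases "d \<in> F - D")
    case True
    have "(\<Sum>i\<in>F - D. sc (c i) (e i)) = sc (c d) (e d) + (\<Sum>i\<in>F - D - {d}. sc (c i) (e i))"
      using assms(1) True by (intro sum.remove) auto
    also have "F - D - {d} = F - insert d D" by auto
    finally have split: "(\<Sum>i\<in>F - D. sc (c i) (e i)) = (\<Sum>i\<in>F - insert d D. sc (c i) (e i)) + sc (c d) (e d)"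
      by (simp only: add.commute)
    have "N (\<Sum>i\<in>F - insert d D. sc (c i) (e i))
        \<le> N ((\<Sum>i\<in>F - insert d D. sc (c i) (e i)) + sc (c d) (e d))"
      by (rule qg_N_le_add) (use assms(1) in auto)
    also have "\<dots> \<le> N (\<Sum>i\<in>F. sc (c i) (e i))"
      using insert.IH unfolding split .
    finally show ?thesis .
  next
    case False
    then have "F - insert d D = F - D" by auto
    then show ?thesis using insert.IH by simp
  qed
qed simp

lemma qg_N_suppress_le:
  assumes "finite B"
  shows "N (x - P B x) \<le> N x"
proof -
  obtain n0 where n0: "B \<subseteq> {..<n0}" using finite_nat_bounded[OF assms] by blast
  have "N (S n x - P B x) \<le> N (S n x)" if "n0 \<le> n" for n
  proof -
    have "S n x - P B x = (\<Sum>k\<in>{..<n} - B. sc (coord sc e k x) (e k))"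
      unfolding S_def P_eq using n0 that by (subst sum_diff) auto
    then show ?thesis unfolding S_def using assms by (simp add: qg_N_sum_diff_le)
  qed
  moreover have "(\<lambda>n. N (S n x - P B x)) \<longlonglongrightarrow> N (x - P B x)" "(\<lambda>n. N (S n x)) \<longlonglongrightarrow> N x"
    by (intro N_tendsto tendsto_intros LIMSEQ_S)+
  ultimately show ?thesis by (intro LIMSEQ_le) auto
qed

lemma qg_N_tail_le:
  assumes "finite B" "{..<n} \<subseteq> B"
  shows "N (x - P B x) \<le> N (x - S n x)"
proof -
  have "P B (x - S n x) = P B x - S n x"
    using assms by (simp add: S_eq_P linear_diff[OF linear_P] P_P Int_absorb1)
  then show ?thesis using qg_N_suppress_le[OF assms(1), of "x - S n x"] by simp
qed

lemma unconditional_if_one_quasi_greedy: "unconditional_basis sc e"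
  unfolding unconditional_basis_def
proof (intro conjI allI impI basis)
  fix x and \<pi> :: "nat \<Rightarrow> nat" assume bij: "bij \<pi>"
  obtain c C where c: "0 < c" "0 < C" "\<And>x. c * norm x \<le> N x" "\<And>x. N x \<le> C * norm x"
    using N_bounds by metis
  show "(\<lambda>n. \<Sum>k<n. sc (coord sc e (\<pi> k) x) (e (\<pi> k))) \<longlonglongrightarrow> x"
  proof (rule LIMSEQ_I)
    fix \<epsilon> :: real assume "0 < \<epsilon>"
    then have "0 < \<epsilon> * c / C" using c by simp
    then obtain n where n: "norm (S n x - x) < \<epsilon> * c / C"
      using LIMSEQ_D[OF LIMSEQ_S _, of _ x] by blast
    obtain K0 where K0: "inv \<pi> ` {..<n} \<subseteq> {..<K0}"
      using finite_nat_bounded[of "inv \<pi> ` {..<n}"] by blast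
    have "norm ((\<Sum>k<K. sc (coord sc e (\<pi> k) x) (e (\<pi> k))) - x) < \<epsilon>" if "K0 \<le> K" for K
    proof -
      define B where "B = \<pi> ` {..<K}"
      have "{..<n} \<subseteq> B"
      proof
        fix i assume "i \<in> {..<n}"
        then have "inv \<pi> i < K" using K0 that by auto
        moreover have "\<pi> (inv \<pi> i) = i" using bij by (simp add: bij_is_surj surj_f_inv_f)
        ultimately show "i \<in> B" unfolding B_def by (metis image_eqI lessThan_iff)
      qed
      moreover have "(\<Sum>k<K. sc (coord sc e (\<pi> k) x) (e (\<pi> k))) = P B x"
        using inj_on_subset[OF bij_is_inj[OF bij] subset_UNIV] by (simp add: B_def P_eq sum.reindex)
      ultimately have "c * norm (x - (\<Sum>k<K. sc (coord sc e (\<pi> k) x) (e (\<pi> k)))) \<le> N (x - S n x)"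
        using qg_N_tail_le[of B n x] c(3)[of "x - P B x"] by (simp add: B_def)
      also have "\<dots> \<le> C * norm (x - S n x)" by (rule c(4))
      also have "\<dots> < \<epsilon> * c" using n c by (simp add: norm_minus_commute field_simps)
      finally show ?thesis using c by (simp add: norm_minus_commute)
    qed
    then show "\<exists>K0. \<forall>K\<ge>K0. norm ((\<Sum>k<K. sc (coord sc e (\<pi> k) x) (e (\<pi> k))) - x) < \<epsilon>" by blast
  qed
qed

end

end

end

section \<open>Unconditional bases have uniformly bounded projections\<close>

lemma exists_bij_betw_image_eq:
  assumes "finite J" "A \<subseteq> J" "I \<subseteq> J" "card I = card A"
  obtains \<sigma> where "bij_betw \<sigma> J J" "\<sigma> ` I = A"
proof -
  have fin: "finite I" "finite A" using assms finite_subset by blast+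
  obtain h1 where h1: "bij_betw h1 I A" using finite_same_card_bij[OF fin assms(4)] by blast
  have "card (J - I) = card (J - A)"
    using assms fin by (simp add: card_Diff_subset)
  then obtain h2 where h2: "bij_betw h2 (J - I) (J - A)"
    using finite_same_card_bij assms(1) by (metis finite_Diff)
  define \<sigma> where "\<sigma> k = (if k \<in> I then h1 k else h2 k)" for k
  have "bij_betw \<sigma> I A" using h1 by (rule bij_betw_cong[THEN iffD1, rotated]) (simp add: \<sigma>_def)
  moreover have "bij_betw \<sigma> (J - I) (J - A)"
    using h2 by (rule bij_betw_cong[THEN iffD1, rotated]) (simp add: \<sigma>_def)
  ultimately have "bij_betw \<sigma> (I \<union> (J - I)) (A \<union> (J - A))"
    by (rule bij_betw_combine) auto
  moreover have "I \<union> (J - I) = J" "A \<union> (J - A) = J" using assms by auto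
  ultimately have "bij_betw \<sigma> J J" by simp
  moreover have "\<sigma> ` I = A" using \<open>bij_betw \<sigma> I A\<close> by (simp add: bij_betw_def)
  ultimately show ?thesis by (rule that)
qed

lemma Least_block_index:
  fixes b :: "nat \<Rightarrow> nat"
  assumes "strict_mono b" "b i \<le> k" "k < b (Suc i)"
  shows "(LEAST i. k < b (Suc i)) = i"
proof (rule Least_equality)
  fix i' assume "k < b (Suc i')"
  then have "b i < b (Suc i')" using assms(2) by linarith
  then show "i \<le> i'" using strict_mono_less[OF assms(1)] by simp
qed (rule assms(3))

lemma exists_bij_gluing_blocks:
  fixes b :: "nat \<Rightarrow> nat"
  assumes b: "strict_mono b" "b 0 = 0"
    and \<sigma>: "\<And>i. bij_betw (\<sigma> i) {b i..<b (Suc i)} {b i..<b (Suc i)}"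
  obtains \<pi> where "bij \<pi>" "\<And>i. bij_betw \<pi> {..<b i} {..<b i}"
    "\<And>i k. b i \<le> k \<Longrightarrow> k < b (Suc i) \<Longrightarrow> \<pi> k = \<sigma> i k"
proof -
  define \<pi> where "\<pi> k = \<sigma> (LEAST i. k < b (Suc i)) k" for k
  have block: "\<pi> k = \<sigma> i k" if "b i \<le> k" "k < b (Suc i)" for i k
    using Least_block_index[OF b(1) that] by (simp add: \<pi>_def)
  have init: "bij_betw \<pi> {..<b i} {..<b i}" for i
  proof (induction i)
    case (Suc i)
    have "bij_betw \<pi> {b i..<b (Suc i)} {b i..<b (Suc i)}"
      using \<sigma>[of i] by (rule bij_betw_cong[THEN iffD1, rotated]) (auto intro: block[symmetric])
    then have "bij_betw \<pi> ({..<b i} \<union> {b i..<b (Suc i)}) ({..<b i} \<union> {b i..<b (Suc i)})"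
      using Suc by (intro bij_betw_combine) auto
    moreover have "{..<b i} \<union> {b i..<b (Suc i)} = {..<b (Suc i)}"
      using strict_monoD[OF b(1), of i "Suc i"] by auto
    ultimately show ?case by simp
  qed (simp add: b(2) bij_betw_def)
  have below: "n < b (Suc n)" for n
    using seq_suble[OF b(1), of "Suc n"] by simp
  have "inj \<pi>"
  proof (rule injI)
    fix k1 k2 assume "\<pi> k1 = \<pi> k2"
    moreover have "k1 \<in> {..<b (Suc (max k1 k2))}" "k2 \<in> {..<b (Suc (max k1 k2))}"
      using below[of "max k1 k2"] by auto
    ultimately show "k1 = k2" using init[of "Suc (max k1 k2)"] by (auto simp: bij_betw_def inj_on_def)
  qed
  moreover have "surj \<pi>"
  proof -
    have "y \<in> range \<pi>" for y
      using below[of y] init[of "Suc y"] by (auto simp: bij_betw_def)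
    then show ?thesis by auto
  qed
  ultimately show ?thesis using that init block by (simp add: bij_def)
qed

lemma exists_bij_listing_blocks:
  fixes b :: "nat \<Rightarrow> nat"
  assumes b: "strict_mono b" "b 0 = 0" and A: "\<And>i. A i \<subseteq> {b i..<b (Suc i)}"
  obtains \<pi> where "bij \<pi>" "\<And>i. bij_betw \<pi> {..<b i} {..<b i}"
    "\<And>i. bij_betw \<pi> {b i..<b i + card (A i)} (A i)"
proof -
  define I where "I i = {b i..<b i + card (A i)}" for i
  have I: "I i \<subseteq> {b i..<b (Suc i)}" for i
    using card_mono[OF _ A[of i]] by (auto simp: I_def)
  have "\<exists>\<sigma>. bij_betw \<sigma> {b i..<b (Suc i)} {b i..<b (Suc i)} \<and> \<sigma> ` I i = A i" for i
    by (rule exists_bij_betw_image_eq[of "{b i..<b (Suc i)}" "A i" "I i"]) (use A I in \<open>auto simp: I_def\<close>)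
  then obtain \<sigma> where \<sigma>: "\<And>i. bij_betw (\<sigma> i) {b i..<b (Suc i)} {b i..<b (Suc i)}" "\<And>i. \<sigma> i ` I i = A i"
    by metis
  obtain \<pi> where \<pi>: "bij \<pi>" "\<And>i. bij_betw \<pi> {..<b i} {..<b i}"
    and block: "\<And>i k. b i \<le> k \<Longrightarrow> k < b (Suc i) \<Longrightarrow> \<pi> k = \<sigma> i k"
    using exists_bij_gluing_blocks[OF b \<sigma>(1)] by blast
  have "bij_betw \<pi> (I i) (A i)" for i
  proof -
    have "inj_on (\<sigma> i) (I i)" using \<sigma>(1)[of i] I[of i] by (meson bij_betw_def inj_on_subset)
    then have "bij_betw (\<sigma> i) (I i) (A i)" using \<sigma>(2)[of i] by (simp add: bij_betw_def)
    moreover have "\<pi> k = \<sigma> i k" if "k \<in> I i" for k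
      using subsetD[OF I[of i] that] by (intro block) auto
    ultimately show ?thesis using bij_betw_cong[of "I i" \<pi> "\<sigma> i" "A i"] by blast
  qed
  with \<pi> show ?thesis using that by (simp add: I_def)
qed

lemma sum_bij_initial_then_block:
  fixes n m :: nat
  assumes "bij_betw \<pi> {..<n} {..<n}" "bij_betw \<pi> {n..<n + m} A"
  shows "(\<Sum>k<n + m. g (\<pi> k)) = (\<Sum>k<n. g k) + sum g A"
proof -
  have "(\<Sum>k<n + m. g (\<pi> k)) = (\<Sum>k<n. g (\<pi> k)) + (\<Sum>k\<in>{n..<n + m}. g (\<pi> k))"
    using sum.atLeastLessThan_concat[of 0 n "n + m" "\<lambda>k. g (\<pi> k)"] by (simp add: lessThan_atLeast0)
  also have "\<dots> = (\<Sum>k<n. g k) + sum g A"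
    using sum.reindex_bij_betw[OF assms(1), of g] sum.reindex_bij_betw[OF assms(2), of g] by simp
  finally show ?thesis .
qed

lemma exists_blocks:
  fixes R :: "nat \<Rightarrow> nat \<Rightarrow> nat set \<Rightarrow> bool"
  assumes "\<And>i n. \<exists>A. finite A \<and> A \<subseteq> {n..} \<and> R i n A"
  obtains b :: "nat \<Rightarrow> nat" and A where "strict_mono b" "b 0 = 0" "\<And>i. A i \<subseteq> {b i..<b (Suc i)}" "\<And>i. R i (b i) (A i)"
proof -
  define X where "X i n = (SOME A. finite A \<and> A \<subseteq> {n..} \<and> R i n A)" for i n
  have X: "finite (X i n)" "X i n \<subseteq> {n..}" "R i n (X i n)" for i n
    using someI_ex[OF assms] unfolding X_def by blast+
  define b where "b = rec_nat 0 (\<lambda>i n. Suc (Max (insert n (X i n))))"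
  have b: "b 0 = 0" "b (Suc i) = Suc (Max (insert (b i) (X i (b i))))" for i
    by (simp_all add: b_def)
  have "X i (b i) \<subseteq> {b i..<b (Suc i)}" for i
    using X(1,2)[of i "b i"] by (auto simp: b(2) less_Suc_eq_le)
  moreover have "b i < b (Suc i)" for i
    using X(1)[of i "b i"] by (simp add: b(2) less_Suc_eq_le)
  then have "strict_mono b" by (rule strict_monoI_Suc)
  ultimately show ?thesis using that[of b "\<lambda>i. X i (b i)"] b(1) X(3) by blast
qed

context seminormalized_schauder_basis
begin

definition proj_bounded :: "real \<Rightarrow> 'a \<Rightarrow> bool" where
  "proj_bounded M x \<longleftrightarrow> (\<forall>A. finite A \<longrightarrow> norm (P A x) \<le> M)"

lemma exists_large_projection_beyond:
  assumes "\<nexists>M. proj_bounded M x"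
  shows "\<exists>A. finite A \<and> A \<subseteq> {n..} \<and> M < norm (P A x)"
proof -
  define D where "D = (\<Sum>j<n. norm (P {j} x))"
  obtain A0 where A0: "finite A0" "M + D < norm (P A0 x)"
    using assms unfolding proj_bounded_def by (meson not_le)
  define A where "A = A0 - {..<n}"
  have split: "P A0 x = P A x + P (A0 \<inter> {..<n}) x"
    using A0(1) P_union[of A "A0 \<inter> {..<n}" x] by (simp add: A_def Un_Diff_Int Diff_Int_distrib2 Int_assoc)
  have "norm (P A0 x) \<le> norm (P A x) + norm (P (A0 \<inter> {..<n}) x)"
    unfolding split by (rule norm_triangle_ineq)
  moreover have "norm (P (A0 \<inter> {..<n}) x) \<le> D"
  proof -
    have "norm (P (A0 \<inter> {..<n}) x) \<le> (\<Sum>j\<in>A0 \<inter> {..<n}. norm (P {j} x))"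
      unfolding P_eq by (simp add: norm_sum)
    also have "\<dots> \<le> D" unfolding D_def by (rule sum_mono2) auto
    finally show ?thesis .
  qed
  ultimately have "M < norm (P A x)"
    using A0(2) by linarith
  moreover have "finite A" "A \<subseteq> {n..}" using A0 by (auto simp: A_def)
  ultimately show ?thesis by blast
qed

text \<open>Were the projections of x unbounded, disjoint finite blocks A i with large projections could
  be listed, in a rearrangement of the basis, right after the initial segments {..<b i}; the
  rearranged partial sums of x would then be unbounded.\<close>
lemma proj_bounded_if_unconditional:
  assumes unc: "unconditional_basis sc e"
  shows "\<exists>M. proj_bounded M x"
proof (rule ccontr)
  assume "\<nexists>M. proj_bounded M x"
  from exists_large_projection_beyond[OF this]
  obtain b A where b: "strict_mono b" "b 0 = 0" and A: "\<And>i. A i \<subseteq> {b i..<b (Suc i)}"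
    and large: "\<And>i. real i + norm (S (b i) x) < norm (P (A i) x)"
    by (rule exists_blocks[where R = "\<lambda>i n A. real i + norm (S n x) < norm (P A x)"]) blast
  obtain \<pi> where \<pi>: "bij \<pi>" "\<And>i. bij_betw \<pi> {..<b i} {..<b i}"
    "\<And>i. bij_betw \<pi> {b i..<b i + card (A i)} (A i)"
    using exists_bij_listing_blocks[OF b A] by blast
  define g where "g j = sc (coord sc e j x) (e j)" for j
  define T where "T K = (\<Sum>k<K. g (\<pi> k))" for K
  have "T \<longlonglongrightarrow> x"
    using unc \<pi>(1) unfolding unconditional_basis_def T_def g_def by blast
  then have "Bseq T" by (intro convergent_imp_Bseq convergentI)
  then obtain M where M: "\<And>K. norm (T K) \<le> M"
    unfolding Bseq_def by (meson less_imp_le)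
  have "T (b i + card (A i)) = S (b i) x + P (A i) x" for i
    unfolding T_def sum_bij_initial_then_block[OF \<pi>(2,3)] by (simp add: S_def P_eq g_def)
  then have "real i < norm (T (b i + card (A i)))" for i
    using large[of i] norm_triangle_ineq2[of "P (A i) x" "- S (b i) x"] by (simp add: add.commute)
  then show False using M reals_Archimedean2[of M] by (meson less_le_not_le order.strict_trans)
qed

end

lemma sum_inverse_power2_le: "m \<le> n \<Longrightarrow> (\<Sum>i\<in>{m..<n}. 1 / 2 ^ i :: real) \<le> 2 / 2 ^ m - 2 / 2 ^ n"
proof (induction n rule: dec_induct)
  case (step n)
  then have "(\<Sum>i\<in>{m..<Suc n}. 1 / 2 ^ i :: real) \<le> 2 / 2 ^ m - 2 / 2 ^ n + 1 / 2 ^ n"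
    by simp
  also have "\<dots> = 2 / 2 ^ m - 2 / 2 ^ Suc n" by (simp add: field_simps)
  finally show ?case .
qed simp

lemma norm_sum_geometric_le:
  fixes f :: "nat \<Rightarrow> 'b::real_normed_vector"
  assumes "\<And>i. norm (f i) \<le> B / 2 ^ i" "m \<le> n"
  shows "norm (\<Sum>i\<in>{m..<n}. f i) \<le> 2 * B / 2 ^ m"
proof -
  have "norm (f 0) \<le> B" using assms(1)[of 0] by simp
  then have "0 \<le> B" using norm_ge_zero[of "f 0"] by linarith
  have "norm (\<Sum>i\<in>{m..<n}. f i) \<le> (\<Sum>i\<in>{m..<n}. B / 2 ^ i)"
    by (rule order_trans[OF norm_sum sum_mono]) (rule assms(1))
  also have "\<dots> = B * (\<Sum>i\<in>{m..<n}. 1 / 2 ^ i)" by (simp add: sum_distrib_left)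
  also have "\<dots> \<le> B * (2 / 2 ^ m)"
  proof (intro mult_left_mono)
    have "0 \<le> 2 / (2::real) ^ n" by simp
    then show "(\<Sum>i\<in>{m..<n}. 1 / 2 ^ i) \<le> 2 / (2::real) ^ m"
      using sum_inverse_power2_le[OF assms(2)] by linarith
  qed (rule \<open>0 \<le> B\<close>)
  finally show ?thesis by (simp add: mult.commute)
qed

lemma exists_successive_approximations:
  fixes G :: "'a::real_normed_vector \<Rightarrow> 'a \<Rightarrow> bool"
  assumes approx: "\<And>z \<epsilon>. 0 < \<epsilon> \<Longrightarrow> \<exists>u. G z u \<and> norm (z - u) < \<epsilon>" and "y \<noteq> 0"
  obtains u where "\<And>i. G (y - (\<Sum>k<i. u k)) (u i)" "\<And>i. norm (y - (\<Sum>k<i. u k)) \<le> norm y / 2 ^ i"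
proof -
  define next_approx where
    "next_approx i z = (SOME u. G z u \<and> norm (z - u) < norm y / 2 ^ Suc i)" for i z
  have next_approx: "G z (next_approx i z) \<and> norm (z - next_approx i z) < norm y / 2 ^ Suc i" for i z
    unfolding next_approx_def by (rule someI_ex, rule approx) (use \<open>y \<noteq> 0\<close> in simp)
  define r where "r = rec_nat y (\<lambda>i z. z - next_approx i z)"
  define u where "u i = next_approx i (r i)" for i
  have r: "r i = y - (\<Sum>k<i. u k)" for i
    by (induction i) (simp_all add: r_def u_def)
  have "G (r i) (u i)" for i using next_approx by (simp add: u_def)
  moreover have "norm (r i) \<le> norm y / 2 ^ i" for i
  proof (cases i)
    case (Suc j)
    then show ?thesis using next_approx[of "r j" j] by (simp add: r_def u_def)
  qed (simp add: r_def)
  ultimately show ?thesis using that[of u] by (simp add: r)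
qed

context seminormalized_schauder_basis
begin

lemma convergent_coord_if_uniformly_Cauchy:
  assumes \<delta>: "\<delta> \<longlonglongrightarrow> 0" and unif: "\<And>n J J'. J \<le> J' \<Longrightarrow> norm (S n (Y J') - S n (Y J)) \<le> \<delta> J"
  shows "convergent (\<lambda>J. coord sc e j (Y J))"
proof -
  obtain a0 where a0: "0 < a0" "\<And>j x. norm (coord sc e j x) \<le> norm (P {j} x) / a0"
    using norm_coord_le by blast
  have step: "dist (coord sc e j (Y J')) (coord sc e j (Y J)) \<le> 2 * \<delta> J / a0" if "J \<le> J'" for J J'
  proof -
    have "P {j} (Y J' - Y J) = S (Suc j) (Y J' - Y J) - S j (Y J' - Y J)"
      by (simp add: S_def P_eq)
    also have "\<dots> = (S (Suc j) (Y J') - S (Suc j) (Y J)) - (S j (Y J') - S j (Y J))"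
      by (simp only: S_eq_P linear_diff[OF linear_P])
    finally have "norm (P {j} (Y J' - Y J)) \<le> norm (S (Suc j) (Y J') - S (Suc j) (Y J)) + norm (S j (Y J') - S j (Y J))"
      by (simp only: norm_triangle_ineq4)
    also have "\<dots> \<le> 2 * \<delta> J" using unif[OF that, of "Suc j"] unif[OF that, of j] by simp
    finally have "norm (P {j} (Y J' - Y J)) \<le> 2 * \<delta> J" .
    have "dist (coord sc e j (Y J')) (coord sc e j (Y J)) = norm (coord sc e j (Y J' - Y J))"
      by (simp add: dist_norm linear_diff[OF linear_coord])
    also have "\<dots> \<le> norm (P {j} (Y J' - Y J)) / a0" by (rule a0(2))
    also have "\<dots> \<le> 2 * \<delta> J / a0"
      using \<open>norm (P {j} (Y J' - Y J)) \<le> 2 * \<delta> J\<close> a0(1) by (simp add: divide_right_mono)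
    finally show ?thesis .
  qed
  have "Cauchy (\<lambda>J. coord sc e j (Y J))"
  proof (rule metric_CauchyI)
    fix \<epsilon> :: real assume "0 < \<epsilon>"
    then have "0 < \<epsilon> * a0 / 2" using a0(1) by simp
    then obtain M where M: "\<And>J. M \<le> J \<Longrightarrow> norm (\<delta> J - 0) < \<epsilon> * a0 / 2"
      using LIMSEQ_D[OF \<delta>] by blast
    have "dist (coord sc e j (Y J')) (coord sc e j (Y J)) < \<epsilon>" if "M \<le> J" "J \<le> J'" for J J'
    proof -
      have "2 * \<delta> J / a0 < \<epsilon>" using M[OF that(1)] a0(1) by (simp add: field_simps abs_less_iff)
      then show ?thesis using step[OF that(2)] by linarith
    qed
    then show "\<exists>M. \<forall>m\<ge>M. \<forall>n\<ge>M. dist (coord sc e j (Y m)) (coord sc e j (Y n)) < \<epsilon>"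
      by (metis dist_commute nle_le)
  qed
  then show ?thesis by (rule real_normed_field_Cauchy_convergent)
qed

lemma tendsto_coord_if_uniformly_Cauchy:
  assumes Y: "Y \<longlonglongrightarrow> y" and \<delta>: "\<delta> \<longlonglongrightarrow> 0"
    and unif: "\<And>n J J'. J \<le> J' \<Longrightarrow> norm (S n (Y J') - S n (Y J)) \<le> \<delta> J"
  shows "(\<lambda>J. coord sc e j (Y J)) \<longlonglongrightarrow> coord sc e j y"
proof -
  obtain \<beta> where \<beta>: "\<And>j. (\<lambda>J. coord sc e j (Y J)) \<longlonglongrightarrow> \<beta> j"
    using convergent_coord_if_uniformly_Cauchy[OF \<delta> unif] unfolding convergent_def by metis
  define z where "z n = (\<Sum>j<n. sc (\<beta> j) (e j))" for n
  have close: "norm (z n - S n (Y J)) \<le> \<delta> J" for n J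
  proof -
    have "(\<lambda>J'. S n (Y J')) \<longlonglongrightarrow> z n"
      unfolding S_def z_def by (intro tendsto_sum tendsto_sc_left \<beta>)
    then have "(\<lambda>J'. norm (S n (Y J') - S n (Y J))) \<longlonglongrightarrow> norm (z n - S n (Y J))"
      by (intro tendsto_intros)
    then show ?thesis by (rule LIMSEQ_le_const2) (use unif in blast)
  qed
  have "z \<longlonglongrightarrow> y"
  proof (rule LIMSEQ_I)
    fix \<epsilon> :: real assume "0 < \<epsilon>"
    then have "\<forall>\<^sub>F J in sequentially. dist (\<delta> J) 0 < \<epsilon> / 3 \<and> dist (Y J) y < \<epsilon> / 3"
      by (intro eventually_conj tendstoD[OF \<delta>] tendstoD[OF Y]) simp_all
    then obtain J where "dist (\<delta> J) 0 < \<epsilon> / 3" "dist (Y J) y < \<epsilon> / 3"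
      unfolding eventually_sequentially by blast
    then have J: "\<delta> J < \<epsilon> / 3" "norm (Y J - y) < \<epsilon> / 3"
      by (simp_all add: dist_norm)
    obtain N where N: "\<And>n. N \<le> n \<Longrightarrow> norm (S n (Y J) - Y J) < \<epsilon> / 3"
      using LIMSEQ_D[OF LIMSEQ_S, of "\<epsilon> / 3" "Y J"] \<open>0 < \<epsilon>\<close> by auto
    have "norm (z n - y) < \<epsilon>" if "N \<le> n" for n
    proof -
      have "norm (z n - y) = norm ((z n - S n (Y J)) + (S n (Y J) - Y J) + (Y J - y))" by simp
      also have "\<dots> \<le> norm (z n - S n (Y J) + (S n (Y J) - Y J)) + norm (Y J - y)"
        by (rule norm_triangle_ineq)
      also have "\<dots> \<le> norm (z n - S n (Y J)) + norm (S n (Y J) - Y J) + norm (Y J - y)"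
        using norm_triangle_ineq by (rule add_right_mono)
      also have "\<dots> < \<epsilon>" using close[of n J] N[OF that] J by linarith
      finally show ?thesis .
    qed
    then show "\<exists>N. \<forall>n\<ge>N. norm (z n - y) < \<epsilon>" by blast
  qed
  then have "coord sc e j y = \<beta> j" unfolding z_def by (rule coord_eqI)
  then show ?thesis using \<beta> by simp
qed

lemma exists_proj_bounded_series:
  assumes approx: "\<And>z \<epsilon>. 0 < \<epsilon> \<Longrightarrow> \<exists>u. proj_bounded (C0 * norm z) u \<and> norm (z - u) < \<epsilon>"
    and "0 \<le> C0" "y \<noteq> 0"
  obtains Y where "Y \<longlonglongrightarrow> y" "Y 0 = 0"
    "\<And>B J J'. finite B \<Longrightarrow> J \<le> J' \<Longrightarrow> norm (P B (Y J') - P B (Y J)) \<le> 2 * (C0 * norm y) / 2 ^ J"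
proof -
  obtain u where u: "\<And>i. proj_bounded (C0 * norm (y - (\<Sum>k<i. u k))) (u i)"
    and rest: "\<And>i. norm (y - (\<Sum>k<i. u k)) \<le> norm y / 2 ^ i"
    using exists_successive_approximations[where G = "\<lambda>z u. proj_bounded (C0 * norm z) u", OF approx \<open>y \<noteq> 0\<close>]
    by blast
  define Y where "Y J = (\<Sum>i<J. u i)" for J
  have Pu: "norm (P B (u i)) \<le> C0 * norm y / 2 ^ i" if "finite B" for B i
  proof -
    have "norm (P B (u i)) \<le> C0 * norm (y - Y i)" using u[of i] that by (simp add: proj_bounded_def Y_def)
    also have "\<dots> \<le> C0 * (norm y / 2 ^ i)"
      using mult_left_mono[OF rest[of i] \<open>0 \<le> C0\<close>] by (simp add: Y_def)
    finally show ?thesis by simp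
  qed
  have "norm (P B (Y J') - P B (Y J)) \<le> 2 * (C0 * norm y) / 2 ^ J" if "finite B" "J \<le> J'" for B J J'
  proof -
    have "Y J' = Y J + (\<Sum>i\<in>{J..<J'}. u i)"
      unfolding Y_def using sum.atLeastLessThan_concat[of 0 J J' u] that(2) by (simp add: lessThan_atLeast0)
    then have "P B (Y J') - P B (Y J) = (\<Sum>i\<in>{J..<J'}. P B (u i))"
      by (simp add: linear_add[OF linear_P] linear_sum[OF linear_P])
    also have "norm \<dots> \<le> 2 * (C0 * norm y) / 2 ^ J"
      by (rule norm_sum_geometric_le[OF _ that(2)]) (use Pu[OF \<open>finite B\<close>] in auto)
    finally show ?thesis .
  qed
  moreover have "Y \<longlonglongrightarrow> y"
  proof (rule Lim_null_comparison[THEN LIM_zero_cancel])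
    show "\<forall>\<^sub>F J in sequentially. norm (Y J - y) \<le> norm y / 2 ^ J"
      by (intro always_eventually allI) (metis Y_def norm_minus_commute rest)
    show "(\<lambda>J. norm y / 2 ^ J) \<longlonglongrightarrow> 0"
      by (rule LIMSEQ_divide_realpow_zero) simp
  qed
  ultimately show ?thesis using that by (simp add: Y_def)
qed

lemma proj_bounded_if_approximable:
  assumes approx: "\<And>z \<epsilon>. 0 < \<epsilon> \<Longrightarrow> \<exists>u. proj_bounded (C0 * norm z) u \<and> norm (z - u) < \<epsilon>"
    and "0 \<le> C0"
  shows "proj_bounded (2 * C0 * norm y) y"
proof (cases "y = 0")
  case True
  then show ?thesis by (simp add: proj_bounded_def linear_0[OF linear_P])
next
  case False
  obtain Y where Y: "Y \<longlonglongrightarrow> y" "Y 0 = 0"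
    and PY: "\<And>B J J'. finite B \<Longrightarrow> J \<le> J' \<Longrightarrow> norm (P B (Y J') - P B (Y J)) \<le> 2 * (C0 * norm y) / 2 ^ J"
    using exists_proj_bounded_series[OF approx \<open>0 \<le> C0\<close> False] by blast
  have "(\<lambda>J. 2 * (C0 * norm y) / 2 ^ J) \<longlonglongrightarrow> 0"
    by (rule LIMSEQ_divide_realpow_zero) simp
  with Y(1) have coord_lim: "(\<lambda>J. coord sc e j (Y J)) \<longlonglongrightarrow> coord sc e j y" for j
    by (rule tendsto_coord_if_uniformly_Cauchy) (simp add: S_eq_P PY)
  show ?thesis
    unfolding proj_bounded_def
  proof (intro allI impI)
    fix A :: "nat set" assume "finite A"
    have "(\<lambda>J. P A (Y J)) \<longlonglongrightarrow> P A y"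
      unfolding P_eq by (intro tendsto_sum tendsto_sc_left coord_lim)
    moreover have "norm (P A (Y J)) \<le> 2 * C0 * norm y" for J
      using PY[OF \<open>finite A\<close>, of 0 J] by (simp add: Y(2) linear_0[OF linear_P])
    ultimately show "norm (P A y) \<le> 2 * C0 * norm y"
      by (intro tendsto_le[OF sequentially_bot tendsto_const tendsto_norm]) auto
  qed
qed

lemma proj_bounded_mono: "proj_bounded M x \<Longrightarrow> M \<le> M' \<Longrightarrow> proj_bounded M' x"
  unfolding proj_bounded_def by (meson order_trans)

lemma proj_bounded_diff: "proj_bounded M x \<Longrightarrow> proj_bounded M' y \<Longrightarrow> proj_bounded (M + M') (x - y)"
  unfolding proj_bounded_def linear_diff[OF linear_P] by (meson add_mono norm_triangle_ineq4 order_trans)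

lemma proj_bounded_scaleR: "proj_bounded M x \<Longrightarrow> proj_bounded (\<bar>t\<bar> * M) (scaleR t x)"
  unfolding proj_bounded_def linear_scale[OF linear_P] by (simp add: mult_left_mono)

lemma exists_ball_in_closure_proj_bounded:
  assumes "unconditional_basis sc e"
  obtains k :: nat and x0 r where "0 < r" "ball x0 r \<subseteq> closure {x. proj_bounded (real k) x}"
proof -
  define E where "E k = closure {x. proj_bounded (real k) x}" for k :: nat
  have "x \<in> E (nat \<lceil>M\<rceil>)" if "proj_bounded M x" for x M
    using closure_subset[of "{x. proj_bounded (real (nat \<lceil>M\<rceil>)) x}"] proj_bounded_mono[OF that real_nat_ceiling_ge]
    by (auto simp: E_def)
  have cover: "\<Union> (range E) = UNIV"
  proof -
    have "x \<in> \<Union> (range E)" for x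
      using proj_bounded_if_unconditional[OF assms, of x] \<open>\<And>x M. proj_bounded M x \<Longrightarrow> _\<close> by blast
    then show ?thesis by blast
  qed
  have "\<exists>k. interior (E k) \<noteq> {}"
  proof (rule ccontr)
    assume "\<nexists>k. interior (E k) \<noteq> {}"
    then have "\<And>T. T \<in> range E \<Longrightarrow> closedin euclidean T \<and> euclidean interior_of T = {}"
      by (auto simp: E_def closed_closedin[symmetric])
    then have "euclidean interior_of \<Union> (range E) = {}"
      by (intro Baire_category_alt) (auto simp: completely_metrizable_space_euclidean)
    then show False using cover by simp
  qed
  then obtain k x0 where "x0 \<in> interior (E k)" by blast
  then obtain r where "0 < r" "ball x0 r \<subseteq> E k"
    using open_contains_ball interior_subset open_interior by (metis order_trans)
  then show ?thesis using that by (simp add: E_def)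
qed

lemma approximation_near_ball:
  assumes ball: "ball x0 r \<subseteq> closure {x. proj_bounded M x}" and "norm y < r" "0 < \<epsilon>"
  shows "\<exists>u. proj_bounded (2 * M) u \<and> norm (y - u) < \<epsilon>"
proof -
  have "x0 + y \<in> closure {x. proj_bounded M x}" "x0 \<in> closure {x. proj_bounded M x}"
    using ball assms(2) le_less_trans[OF norm_ge_zero assms(2)] by (auto simp: dist_norm)
  then obtain u1 u2 where u: "proj_bounded M u1" "dist u1 (x0 + y) < \<epsilon> / 2"
    "proj_bounded M u2" "dist u2 x0 < \<epsilon> / 2"
    using \<open>0 < \<epsilon>\<close> closure_approachable by (metis mem_Collect_eq half_gt_zero)
  have "norm (y - (u1 - u2)) \<le> norm (u1 - (x0 + y)) + norm (u2 - x0)"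
    using norm_triangle_ineq4[of "u1 - (x0 + y)" "u2 - x0"] by (simp add: algebra_simps norm_minus_commute)
  then have "norm (y - (u1 - u2)) < \<epsilon>" using u by (simp add: dist_norm)
  with proj_bounded_diff[OF u(1,3)] show ?thesis by (metis mult_2)
qed

text \<open>Baire category: since every x has bounded projections, a uniform bound holds up to
  arbitrarily small errors.\<close>
lemma exists_approximation_proj_bounded:
  assumes "unconditional_basis sc e"
  obtains C0 where "0 \<le> C0" "\<And>y \<epsilon>. 0 < \<epsilon> \<Longrightarrow> \<exists>u. proj_bounded (C0 * norm y) u \<and> norm (y - u) < \<epsilon>"
proof -
  obtain k :: nat and x0 r where r: "0 < r" "ball x0 r \<subseteq> closure {x. proj_bounded (real k) x}"
    using exists_ball_in_closure_proj_bounded[OF assms] .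
  define C0 where "C0 = 4 * real k / r"
  have "\<exists>u. proj_bounded (C0 * norm y) u \<and> norm (y - u) < \<epsilon>" if "0 < \<epsilon>" for y \<epsilon>
  proof (cases "y = 0")
    case True
    then show ?thesis using that by (intro exI[of _ 0]) (simp add: proj_bounded_def linear_0[OF linear_P])
  next
    case False
    define t where "t = 2 * norm y / r"
    have t: "0 < t" using False r by (simp add: t_def)
    have "norm (scaleR (1 / t) y) = r / 2" using False r by (simp add: t_def)
    then have "norm (scaleR (1 / t) y) < r" using r by simp
    moreover have "0 < \<epsilon> / t" using t that by simp
    ultimately obtain u where u: "proj_bounded (2 * real k) u" "norm (scaleR (1 / t) y - u) < \<epsilon> / t"
      using approximation_near_ball[OF r(2)] by blast
    have "\<bar>t\<bar> * (2 * real k) = C0 * norm y" using r by (simp add: t_def C0_def)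
    then have "proj_bounded (C0 * norm y) (scaleR t u)"
      using proj_bounded_scaleR[OF u(1), of t] by simp
    moreover have "y - scaleR t u = scaleR t (scaleR (1 / t) y - u)" using t by (simp add: scaleR_diff_right)
    then have "norm (y - scaleR t u) = t * norm (scaleR (1 / t) y - u)" using t by simp
    then have "norm (y - scaleR t u) < \<epsilon>" using u(2) t by (simp add: pos_less_divide_eq mult.commute)
    ultimately show ?thesis by blast
  qed
  moreover have "0 \<le> C0" using r by (simp add: C0_def)
  ultimately show ?thesis using that by blast
qed

lemma uniform_proj_bound_if_unconditional:
  assumes "unconditional_basis sc e"
  obtains C where "0 < C" "\<And>x. proj_bounded (C * norm x) x"
proof -
  obtain C0 where "0 \<le> C0" "\<And>y \<epsilon>. 0 < \<epsilon> \<Longrightarrow> \<exists>u. proj_bounded (C0 * norm y) u \<and> norm (y - u) < \<epsilon>"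
    using exists_approximation_proj_bounded[OF assms] by blast
  then have "proj_bounded ((2 * C0 + 1) * norm x) x" for x
    by (intro proj_bounded_mono[OF proj_bounded_if_approximable]) (auto simp: algebra_simps)
  with \<open>0 \<le> C0\<close> show ?thesis using that[of "2 * C0 + 1"] by simp
qed

end

context seminormalized_schauder_basis
begin

section \<open>The renorming\<close>

definition proj_sup :: "'a \<Rightarrow> real" where
  "proj_sup x = (SUP A\<in>{A. finite A}. norm (P A x))"

lemma proj_sup_le: "proj_bounded M x \<Longrightarrow> proj_sup x \<le> M"
  unfolding proj_sup_def proj_bounded_def by (rule cSUP_least) auto

lemma norm_P_le_proj_sup: "proj_bounded M x \<Longrightarrow> finite A \<Longrightarrow> norm (P A x) \<le> proj_sup x"
  unfolding proj_sup_def proj_bounded_def by (rule cSUP_upper) (auto intro: bdd_aboveI2)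

context
  fixes C :: real
  assumes C: "0 < C" and uniform: "\<And>x. proj_bounded (C * norm x) x"
begin

lemma norm_le_proj_sup: "norm x \<le> proj_sup x"
proof -
  have "(\<lambda>n. norm (S n x)) \<longlonglongrightarrow> norm x" by (intro tendsto_norm LIMSEQ_S)
  moreover have "norm (S n x) \<le> proj_sup x" for n
    unfolding S_eq_P by (rule norm_P_le_proj_sup[OF uniform]) simp
  ultimately show ?thesis by (intro LIMSEQ_le_const2) auto
qed

lemma proj_sup_sc: "proj_sup (sc a x) = norm a * proj_sup x"
proof -
  have le: "proj_sup (sc a x) \<le> norm a * proj_sup x" for a x
    unfolding proj_bounded_def
    by (rule proj_sup_le) (auto simp: proj_bounded_def P_sc norm_sc intro: mult_left_mono norm_P_le_proj_sup[OF uniform])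
  show ?thesis
  proof (cases "a = 0")
    case True
    then show ?thesis using le[of 0 x] norm_le_proj_sup[of 0] by simp
  next
    case False
    have "norm a * proj_sup x = norm a * proj_sup (sc (inverse a) (sc a x))"
      using False by (simp flip: sc_mult add: sc_one)
    also have "\<dots> \<le> norm a * (norm (inverse a) * proj_sup (sc a x))"
      by (intro mult_left_mono le) simp
    also have "\<dots> = proj_sup (sc a x)" using False by (simp add: norm_inverse)
    finally show ?thesis using le[of a x] by simp
  qed
qed

lemma equivalent_norm_proj_sup: "equivalent_norm sc proj_sup"
proof -
  have upper: "proj_sup x \<le> C * norm x" for x by (rule proj_sup_le[OF uniform])
  have "proj_sup x = 0 \<longleftrightarrow> x = 0" for x
    using norm_le_proj_sup[of x] upper[of x] by auto
  moreover have "proj_sup (x + y) \<le> proj_sup x + proj_sup y" for x y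
    by (rule proj_sup_le) (auto simp: proj_bounded_def linear_add[OF linear_P]
        intro: order_trans[OF norm_triangle_ineq] add_mono norm_P_le_proj_sup[OF uniform])
  ultimately show ?thesis
    unfolding equivalent_norm_def is_norm_over_def using C upper norm_le_proj_sup proj_sup_sc
    by (intro conjI allI exI[of _ 1] exI[of _ C]) auto
qed

lemma one_quasi_greedy_proj_sup: "one_quasi_greedy sc e proj_sup"
  unfolding one_quasi_greedy_def
proof (intro allI impI conjI)
  fix x m A assume "greedy_set sc e x m A"
  then have A: "finite A" by (simp add: greedy_set_def)
  have "norm (P B (P A x)) \<le> proj_sup x" if "finite B" for B
    using that A by (simp add: P_P norm_P_le_proj_sup[OF uniform])
  then show "proj_sup (greedy_sum sc e x A) \<le> proj_sup x"
    by (intro proj_sup_le) (simp add: proj_bounded_def)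
  have "P B (x - P A x) = P (B - A) x" if "finite B" for B
  proof -
    have "B = (B - A) \<union> (B \<inter> A)" "(B - A) \<inter> (B \<inter> A) = {}" by blast+
    then have "P B x = P (B - A) x + P (B \<inter> A) x"
      using P_union[of "B - A" "B \<inter> A" x] that by simp
    then show ?thesis using that A by (simp add: linear_diff[OF linear_P] P_P)
  qed
  then show "proj_sup (x - greedy_sum sc e x A) \<le> proj_sup x"
    by (intro proj_sup_le) (simp add: proj_bounded_def norm_P_le_proj_sup[OF uniform])
qed

end

end

theorem corollary2p4:
  fixes sc :: "'k::real_normed_field \<Rightarrow> 'a::banach \<Rightarrow> 'a"
    and e :: "nat \<Rightarrow> 'a"
  assumes "normed_scalar_action sc"
    and "\<not> finite_dimensional_over sc"
    and "schauder_basis sc e"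
    and "semi_normalized e"
  shows "(\<exists>N. equivalent_norm sc N \<and> one_quasi_greedy sc e N) \<longleftrightarrow> unconditional_basis sc e"
proof -
  interpret seminormalized_schauder_basis sc e
    using assms(1,3,4) by unfold_locales
  show ?thesis
  proof
    assume "\<exists>N. equivalent_norm sc N \<and> one_quasi_greedy sc e N"
    then show "unconditional_basis sc e" using unconditional_if_one_quasi_greedy by blast
  next
    assume "unconditional_basis sc e"
    then obtain C where "0 < C" "\<And>x. proj_bounded (C * norm x) x"
      using uniform_proj_bound_if_unconditional by blast
    then show "\<exists>N. equivalent_norm sc N \<and> one_quasi_greedy sc e N"
      using equivalent_norm_proj_sup one_quasi_greedy_proj_sup by blast
  qed
qed

end
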